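(* Let $\pi$ be a representation of $\mathcal A_\alpha$ on a Hilbert space of finite dimension $n$. (i) $\Lambda_{T(\pi)}=2-\Lambda_\pi$. (ii) Let $\alpha>0$, $\alpha\ne1$. (a) If $\operatorname{rk}\pi(x_1)+\operatorname{rk}\pi(x_2)>n=\operatorname{rk}\pi(x_3)+\operatorname{rk}\pi(x_4)$, then $\Lambda_{S(\pi)}=\{0\}\cup\big(\frac{\alpha}{\alpha-1}-\frac1{\alpha-1}\Lambda_\pi\big)$. (b) If $\operatorname{rk}\pi(x_3)+\operatorname{rk}\pi(x_4)>n=\operatorname{rk}\pi(x_1)+\operatorname{rk}\pi(x_2)$, then $\Lambda_{S(\pi)}=\{\frac{\alpha}{\alpha-1}\}\cup\big(\frac{\alpha}{\alpha-1}-\frac1{\alpha-1}\Lambda_\pi\big)$. (iii) Let $\alpha\in(0,3)$. (a) If $\operatorname{rk}\pi(x_1)+\operatorname{rk}\pi(x_2)<n=\operatorname{rk}\pi(x_3)+\operatorname{rk}\pi(x_4)$, then $\Lambda_{\Phi^+(\pi)}=\{0\}\cup\big(1-\frac1{3-\alpha}+\frac1{3-\alpha}\Lambda_\pi\big)$. (b) If $\operatorname{rk}\pi(x_3)+\operatorname{rk}\pi(x_4)<n=\operatorname{rk}\pi(x_1)+\operatorname{rk}\pi(x_2)$, then $\Lambda_{\Phi^+(\pi)}=\{1+\frac1{3-\alpha}\}\cup\big(1-\frac1{3-\alpha}+\frac1{3-\alpha}\Lambda_\pi\big)$. (Here $c-d\Lambda=\{c-d\lambda:\lambda\in\Lambda\}$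 etc.)
   Context: For $\alpha\in\mathbb R$, a representation $\pi$ of $\mathcal A_\alpha$ (the universal C*-algebra generated by projections $x_1,\dots,x_4$ with $x_1+\dots+x_4=\alpha$) on a Hilbert space $\mathcal H$ is a quadruple $(\pi(x_1),\dots,\pi(x_4))$ of orthogonal projections on $\mathcal H$ with sum $\alpha I$. For finite-dimensional $\pi$, $\Lambda_\pi\subseteq[0,2]$ denotes the set of eigenvalues of $\pi(x_3)+\pi(x_4)$. Linear reflection: $T(\pi)$ is the representation of $\mathcal A_{4-\alpha}$ on $\mathcal H$ with $T(\pi)(x_i)=I-\pi(x_i)$. Hyperbolic reflection: for $\alpha>0$, $\alpha\neq1$ and $\pi$ on $\mathcal H$, let $\widehat{\mathcal H}=\bigoplus_{i=1}^4\operatorname{ran}\pi(x_i)$, let $w_i:\operatorname{ran}\pi(x_i)\to\widehat{\mathcal H}$ be the canonical injections, $u_i:\operatorname{ran}\pi(x_i)\to\mathcal H$ the inclusions, and $u=\frac1{\sqrt\alpha}(u_1^*,u_2^*,u_3^*,u_4^* )^{T}:\mathcal H\to\widehat{\mathcal H}$ (an isometry). Let $\mathcal K=\operatorname{ran}(I-uu^* )\subseteq\widehat{\mathcal H}$ with inclusion $v:\mathcal K\to\widehat{\mathcal H}$. Then $S(\pi)$ is the representation of $\mathcal A_{\alpha/(\alpha-1)}$ on $\mathcal K$ with $S(\pi)(x_i)=\frac{\alpha}{\alpha-1}v^*w_iw_i^*v$ (these are projections summing to $\frac\alpha{\alpha-1}I$). For $\alpha\in(0,3)$, $\Phi^+(\pi)=S(T(\pi))$,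 a representation of $\mathcal A_{1+\frac1{3-\alpha}}$. *)

theory Defs
  imports Complex_Main "Jordan_Normal_Form.Schur_Decomposition" "Jordan_Normal_Form.DL_Rank"
begin

text \<open>A finite-dimensional Hilbert space of dimension n is modelled as complex column
vectors of length n with the standard inner product; operators are complex n x n matrices.
A representation of A_alpha is a family P indexed by 1..4 of orthogonal projections
(idempotent, self-adjoint) summing to alpha times the identity.\<close>

definition is_rep :: "nat \<Rightarrow> real \<Rightarrow> (nat \<Rightarrow> complex mat) \<Rightarrow> bool" where
  "is_rep n \<alpha> P \<longleftrightarrow>
     (\<forall>i\<in>{1..4::nat}. P i \<in> carrier_mat n n \<and> P i * P i = P i \<and> mat_adjoint (P i) = P i) \<and>
     P 1 + P 2 + P 3 + P 4 = of_real \<alpha> \<cdot>\<^sub>m 1\<^sub>m n"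

definition Lam :: "(nat \<Rightarrow> complex mat) \<Rightarrow> complex set" where
  "Lam P = {l. eigenvalue (P 3 + P 4) l}"

definition rk :: "nat \<Rightarrow> complex mat \<Rightarrow> nat" where
  "rk n A = vec_space.rank n (A :: complex mat)"

definition lin_refl :: "nat \<Rightarrow> (nat \<Rightarrow> complex mat) \<Rightarrow> (nat \<Rightarrow> complex mat)" where
  "lin_refl n P = (\<lambda>i. 1\<^sub>m n - P i)"

definition ranM :: "nat \<Rightarrow> complex mat \<Rightarrow> complex vec set" where
  "ranM n A = {A *\<^sub>v x | x. x \<in> carrier_vec n}"

definition hat_space :: "nat \<Rightarrow> (nat \<Rightarrow> complex mat) \<Rightarrow> (nat \<Rightarrow> complex vec) set" where
  "hat_space n P = {h. (\<forall>i\<in>{1..4::nat}. h i \<in> ranM n (P i)) \<and> (\<forall>i. i \<notin> {1..4} \<longrightarrow> h i = 0\<^sub>v n)}"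

definition hat_zero :: "nat \<Rightarrow> nat \<Rightarrow> complex vec" where
  "hat_zero n = (\<lambda>i. 0\<^sub>v n)"

definition hat_inner :: "(nat \<Rightarrow> complex vec) \<Rightarrow> (nat \<Rightarrow> complex vec) \<Rightarrow> complex" where
  "hat_inner h g = (\<Sum>i\<in>{1..4::nat}. h i \<bullet>c g i)"

text \<open>The isometry u = alpha^(-1/2) (u1*, ..., u4*)^T, where ui* (the adjoint of the
inclusion of ran P i) is the orthogonal projection P i, and its adjoint
u* h = alpha^(-1/2) (h1 + h2 + h3 + h4).\<close>
definition hat_u :: "nat \<Rightarrow> real \<Rightarrow> (nat \<Rightarrow> complex mat) \<Rightarrow> complex vec \<Rightarrow> (nat \<Rightarrow> complex vec)" where
  "hat_u n \<alpha> P x = (\<lambda>i. if i \<in> {1..4} then of_real (1 / sqrt \<alpha>) \<cdot>\<^sub>v (P i *\<^sub>v x) else 0\<^sub>v n)"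

definition hat_u_adj :: "real \<Rightarrow> (nat \<Rightarrow> complex vec) \<Rightarrow> complex vec" where
  "hat_u_adj \<alpha> h = of_real (1 / sqrt \<alpha>) \<cdot>\<^sub>v (h 1 + h 2 + h 3 + h 4)"

definition hat_K :: "nat \<Rightarrow> real \<Rightarrow> (nat \<Rightarrow> complex mat) \<Rightarrow> (nat \<Rightarrow> complex vec) set" where
  "hat_K n \<alpha> P = {(\<lambda>i. h i - hat_u n \<alpha> P (hat_u_adj \<alpha> h) i) | h. h \<in> hat_space n P}"

definition hat_E :: "nat \<Rightarrow> nat \<Rightarrow> (nat \<Rightarrow> complex vec) \<Rightarrow> (nat \<Rightarrow> complex vec)" where
  "hat_E n i h = (\<lambda>j. if j = i then h j else 0\<^sub>v n)"

text \<open>S(pi)(x_i) = c v* w_i w_i* v on K, c = alpha/(alpha-1). An element l is an eigenvalue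
of S(pi)(x3) + S(pi)(x4) iff there is a nonzero k in K with v*(A v k) = l k, where
A = c (w3 w3* + w4 w4*); since v* is the adjoint of the inclusion v of K, this says exactly
that <A k, k'> = l <k, k'> for all k' in K.\<close>
definition hyp_Lam :: "nat \<Rightarrow> real \<Rightarrow> (nat \<Rightarrow> complex mat) \<Rightarrow> complex set" where
  "hyp_Lam n \<alpha> P = {l. \<exists>k\<in>hat_K n \<alpha> P. k \<noteq> hat_zero n \<and>
      (\<forall>k'\<in>hat_K n \<alpha> P.
         hat_inner (\<lambda>j. of_real (\<alpha> / (\<alpha> - 1)) \<cdot>\<^sub>v (hat_E n 3 k j + hat_E n 4 k j)) k'
           = l * hat_inner k k')}"

text \<open>Lambda of Phi+(pi) = S(T(pi)), T(pi) being a representation of A_(4-alpha).\<close>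
definition phi_plus_Lam :: "nat \<Rightarrow> real \<Rightarrow> (nat \<Rightarrow> complex mat) \<Rightarrow> complex set" where
  "phi_plus_Lam n \<alpha> P = hyp_Lam n (4 - \<alpha>) (lin_refl n P)"

end

theory Submission
  imports Defs
begin

text \<open>Part (i) is immediate, as T replaces P 3 + P 4 by 2 I - (P 3 + P 4), and part (iii) follows by
  applying part (ii) to T(\<pi>), a representation of A_(4 - \<alpha>) whose ranks are complementary to
  those of \<pi>.

  For part (ii), K = ran (I - u u* ) is the kernel of u*, i.e. the tuples k with k i \<in> ran (P i)
  and k 1 + k 2 + k 3 + k 4 = 0, and its orthogonal complement in the direct sum is ran u, the
  tuples (P i x).  Hence l is an eigenvalue of S(\<pi>)(x3) + S(\<pi>)(x4) iff there are a nonzero k \<in> K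
  and a vector x with P i x = -l k i for i = 1, 2 and P i x = (c - l) k i for i = 3, 4, where
  c = \<alpha>/(\<alpha> - 1).  Summing shows k 3 + k 4 = (\<alpha> - 1) x, so if x \<noteq> 0 then x is an eigenvector of
  P 3 + P 4 for \<lambda> = (c - l)(\<alpha> - 1), i.e. l = c - \<lambda>/(\<alpha> - 1); conversely every eigenvalue
  \<lambda> \<notin> {0, \<alpha>} arises this way.  If x = 0, then l = 0 with k in ran P 1 \<inter> ran P 2, or l = c with
  k in ran P 3 \<inter> ran P 4.  The rank conditions settle these boundary cases: if the ranks of two
  projections add up to more than n their ranges meet, and if they add up to exactly n their ranges
  meet iff their kernels do, which for P 3, P 4 (resp. P 1, P 2) means that 0 (resp. \<alpha>) lies in
  \<Lambda>(\<pi>); these are exactly the eigenvalues sent to c and 0.\<close>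

definition orth_proj :: "nat \<Rightarrow> complex mat \<Rightarrow> bool" where
  "orth_proj n A \<longleftrightarrow> A \<in> carrier_mat n n \<and> A * A = A \<and> mat_adjoint A = A"

definition common_fixed_vector :: "nat \<Rightarrow> complex mat \<Rightarrow> complex mat \<Rightarrow> bool" where
  "common_fixed_vector n A B \<longleftrightarrow> (\<exists>v\<in>carrier_vec n. v \<noteq> 0\<^sub>v n \<and> A *\<^sub>v v = v \<and> B *\<^sub>v v = v)"

definition common_null_vector :: "nat \<Rightarrow> complex mat \<Rightarrow> complex mat \<Rightarrow> bool" where
  "common_null_vector n A B \<longleftrightarrow> (\<exists>v\<in>carrier_vec n. v \<noteq> 0\<^sub>v n \<and> A *\<^sub>v v = 0\<^sub>v n \<and> B *\<^sub>v v = 0\<^sub>v n)"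

lemma mat_wide_kernel_nonzero:
  fixes M :: "'a :: field mat"
  assumes M: "M \<in> carrier_mat n m" and nm: "n < m"
  shows "\<exists>v\<in>carrier_vec m. v \<noteq> 0\<^sub>v m \<and> M *\<^sub>v v = 0\<^sub>v n"
proof -
  define M' where "M' = mat m m (\<lambda>(i,j). if i < n then M $$ (i,j) else 0)"
  have M'c: "M' \<in> carrier_mat m m" unfolding M'_def by simp
  have "M' = mat\<^sub>r m m (\<lambda>i. if i = m - 1 then 0\<^sub>v m else row M' i)"
    by (rule eq_matI) (use nm in \<open>auto simp: M'_def\<close>)
  hence "det M' = 0" using det_row_0[of "m-1" m "\<lambda>i. row M' i"] nm M'c by auto
  then obtain v where v: "v \<in> carrier_vec m" "v \<noteq> 0\<^sub>v m" "M' *\<^sub>v v = 0\<^sub>v m"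
    using det_0_iff_vec_prod_zero_field[OF M'c] by auto
  have "M *\<^sub>v v = 0\<^sub>v n"
  proof (rule eq_vecI)
    fix i assume "i < dim_vec (0\<^sub>v n :: 'a vec)"
    hence i: "i < n" by simp
    have "(M' *\<^sub>v v) $ i = (M *\<^sub>v v) $ i"
      using i nm M v(1) by (auto simp: M'_def scalar_prod_def intro!: sum.cong)
    thus "(M *\<^sub>v v) $ i = 0\<^sub>v n $ i" using v(3) i nm by simp
  qed (use M in auto)
  thus ?thesis using v by blast
qed

lemma idempotent_mult_of_cols:
  fixes P B :: "'a :: comm_ring_1 mat"
  assumes P: "P \<in> carrier_mat n n" "P * P = P" and B: "B \<in> carrier_mat n r"
    and sub: "set (cols B) \<subseteq> set (cols P)"
  shows "P * B = B"
proof (rule eq_matI)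
  fix i j assume i: "i < dim_row B" and j: "j < dim_col B"
  have "col B j \<in> set (cols P)" using sub j by (metis cols_length cols_nth nth_mem subsetD)
  then obtain k where k: "k < n" "col B j = col P k" using P(1)
    by (metis cols_length cols_nth in_set_conv_nth carrier_matD(2))
  have e: "P *\<^sub>v col B j = col B j"
    using k P col_mult2[OF P(1) P(1) k(1)] by simp
  have cP: "col (P * B) j = P *\<^sub>v col B j" using col_mult2[OF P(1) B] j B by simp
  have "(P * B) $$ (i, j) = col (P * B) j $ i" using i j P B by simp
  also have "\<dots> = B $$ (i,j)" unfolding cP e using i j B by simp
  finally show "(P * B) $$ (i, j) = B $$ (i, j)" .
qed (use P B in auto)

lemma idempotent_range_basis:
  fixes P :: "complex mat"
  assumes P: "P \<in> carrier_mat n n" "P * P = P"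
  shows "\<exists>B\<in>carrier_mat n (rk n P). P * B = B \<and>
            (\<forall>a\<in>carrier_vec (rk n P). B *\<^sub>v a = 0\<^sub>v n \<longrightarrow> a = 0\<^sub>v (rk n P))"
proof -
  interpret vec_space "TYPE(complex)" n .
  have "lin_indpt {}"
    by (metis empty_subsetI fin_dim finite_basis_exists subset_li_is_li vec_vs vectorspace.basis_def)
  then obtain S where S: "finite S" "maximal S (\<lambda>T. T \<subseteq> set (cols P) \<and> lin_indpt T)"
    using maximal_exists_superset[of "set (cols P)" "\<lambda>T. T \<subseteq> set (cols P) \<and> lin_indpt T" "{}"]
    by auto
  have rk: "rk n P = card S" unfolding rk_def using rank_card_indpt[OF P(1) S(2)] .
  have Ssub: "S \<subseteq> set (cols P)" "lin_indpt S" using S(2) unfolding maximal_def by auto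
  have Scar: "S \<subseteq> carrier_vec n" using Ssub(1) P(1) cols_dim by blast
  obtain xs where xs: "set xs = S" "distinct xs" using finite_distinct_list[OF S(1)] by auto
  define B where "B = mat_of_cols n xs"
  have "length xs = rk n P" using rk xs distinct_card by metis
  hence Bc: "B \<in> carrier_mat n (rk n P)" unfolding B_def by auto
  have cB: "cols B = xs" unfolding B_def using Scar xs by (simp add: cols_mat_of_cols)
  have "\<forall>a\<in>carrier_vec (rk n P). B *\<^sub>v a = 0\<^sub>v n \<longrightarrow> a = 0\<^sub>v (rk n P)"
  proof (intro ballI impI, rule ccontr)
    fix a assume a: "a \<in> carrier_vec (rk n P)" "B *\<^sub>v a = 0\<^sub>v n" "a \<noteq> 0\<^sub>v (rk n P)"
    have "lin_dep (set (cols B))" using lin_depI[OF Bc a(1) a(3) a(2)] cB xs by auto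
    thus False using Ssub(2) cB xs by auto
  qed
  moreover have "P * B = B" using idempotent_mult_of_cols[OF P Bc] Ssub(1) cB xs by auto
  ultimately show ?thesis using Bc by blast
qed

lemma four_block_row_mult_vec:
  fixes B1 B2 :: "'a :: comm_ring_1 mat"
  assumes B1: "B1 \<in> carrier_mat n r" and B2: "B2 \<in> carrier_mat n s"
    and a: "a \<in> carrier_vec r" and b: "b \<in> carrier_vec s"
  shows "four_block_mat B1 B2 (0\<^sub>m 0 r) (0\<^sub>m 0 s) *\<^sub>v (a @\<^sub>v b) = B1 *\<^sub>v a + B2 *\<^sub>v b"
proof -
  have "four_block_mat B1 B2 (0\<^sub>m 0 r) (0\<^sub>m 0 s) *\<^sub>v (a @\<^sub>v b) =
     (B1 *\<^sub>v a + B2 *\<^sub>v b) @\<^sub>v (0\<^sub>m 0 r *\<^sub>v a + 0\<^sub>m 0 s *\<^sub>v b)"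
    by (rule four_block_mat_mult_vec[OF B1 B2 _ _ a b]) auto
  also have "\<dots> = B1 *\<^sub>v a + B2 *\<^sub>v b"
    by (rule eq_vecI) (use B1 B2 a b in auto)
  finally show ?thesis .
qed

lemma four_block_row_carrier:
  fixes B1 B2 :: "'a :: zero mat"
  assumes "B1 \<in> carrier_mat n r"
  shows "four_block_mat B1 B2 (0\<^sub>m 0 r) (0\<^sub>m 0 s) \<in> carrier_mat n (r + s)"
  using four_block_carrier_mat[OF assms, of "0\<^sub>m 0 s" 0 s] by simp

text \<open>A nontrivial relation B_P a + B_Q b = 0 between injective matrices whose columns lie in
  ran P and ran Q produces the nonzero vector B_P a = B_Q (-b) in ran P \<inter> ran Q.\<close>

lemma common_fixed_vector_of_relation:
  fixes P Q BP BQ :: "complex mat"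
  assumes P: "P \<in> carrier_mat n n" and PB: "P * BP = BP" and BP: "BP \<in> carrier_mat n r"
    and kP: "\<forall>a\<in>carrier_vec r. BP *\<^sub>v a = 0\<^sub>v n \<longrightarrow> a = 0\<^sub>v r"
    and Q: "Q \<in> carrier_mat n n" and QB: "Q * BQ = BQ" and BQ: "BQ \<in> carrier_mat n s"
    and kQ: "\<forall>b\<in>carrier_vec s. BQ *\<^sub>v b = 0\<^sub>v n \<longrightarrow> b = 0\<^sub>v s"
    and a: "a \<in> carrier_vec r" and b: "b \<in> carrier_vec s"
    and rel: "BP *\<^sub>v a + BQ *\<^sub>v b = 0\<^sub>v n"
    and nz: "a \<noteq> 0\<^sub>v r \<or> b \<noteq> 0\<^sub>v s"
  shows "common_fixed_vector n P Q"
proof -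
  define x where "x = BP *\<^sub>v a"
  have xc: "x \<in> carrier_vec n" unfolding x_def using BP a by simp
  have Bb: "BQ *\<^sub>v b = - x"
  proof (rule eq_vecI)
    fix i assume "i < dim_vec (- x)"
    hence i: "i < n" using xc by simp
    have "(BP *\<^sub>v a + BQ *\<^sub>v b) $ i = 0" using rel i by simp
    thus "(BQ *\<^sub>v b) $ i = (- x) $ i" using i BP BQ unfolding x_def by (simp add: add_eq_0_iff)
  qed (use xc BQ in simp)
  have x_eq: "x = BQ *\<^sub>v (- b)"
  proof -
    have "BQ *\<^sub>v (- b) = - (BQ *\<^sub>v b)" using BQ b by (intro eq_vecI) auto
    thus ?thesis using Bb by simp
  qed
  have "P *\<^sub>v x = x" unfolding x_def
    using assoc_mult_mat_vec[OF P BP a, symmetric] PB by simp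
  moreover have "Q *\<^sub>v x = x" unfolding x_eq
    using assoc_mult_mat_vec[OF Q BQ uminus_carrier_vec[THEN iffD2, OF b], symmetric] QB by simp
  moreover have "x \<noteq> 0\<^sub>v n"
  proof
    assume x0: "x = 0\<^sub>v n"
    hence "a = 0\<^sub>v r" using kP a x_def by auto
    moreover have "b = 0\<^sub>v s" using kQ b Bb x0 by auto
    ultimately show False using nz by simp
  qed
  ultimately show ?thesis unfolding common_fixed_vector_def using xc by blast
qed

lemma common_fixed_vector_if_rank_gt:
  fixes P Q :: "complex mat"
  assumes P: "P \<in> carrier_mat n n" "P * P = P" and Q: "Q \<in> carrier_mat n n" "Q * Q = Q"
    and rk: "rk n P + rk n Q > n"
  shows "common_fixed_vector n P Q"
proof -
  define r s where "r = rk n P" and "s = rk n Q"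
  obtain BP where BP: "BP \<in> carrier_mat n r" "P * BP = BP"
      "\<forall>a\<in>carrier_vec r. BP *\<^sub>v a = 0\<^sub>v n \<longrightarrow> a = 0\<^sub>v r"
    using idempotent_range_basis[OF P] unfolding r_def by blast
  obtain BQ where BQ: "BQ \<in> carrier_mat n s" "Q * BQ = BQ"
      "\<forall>b\<in>carrier_vec s. BQ *\<^sub>v b = 0\<^sub>v n \<longrightarrow> b = 0\<^sub>v s"
    using idempotent_range_basis[OF Q] unfolding s_def by blast
  define M where "M = four_block_mat BP BQ (0\<^sub>m 0 r) (0\<^sub>m 0 s)"
  obtain v where v: "v \<in> carrier_vec (r + s)" "v \<noteq> 0\<^sub>v (r + s)" "M *\<^sub>v v = 0\<^sub>v n"
    using mat_wide_kernel_nonzero[OF four_block_row_carrier[OF BP(1)]] rk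
    unfolding M_def r_def s_def by blast
  define a b where "a = vec_first v r" and "b = vec_last v s"
  have ab: "v = a @\<^sub>v b" and a: "a \<in> carrier_vec r" and b: "b \<in> carrier_vec s"
    using v(1) unfolding a_def b_def by auto
  have "BP *\<^sub>v a + BQ *\<^sub>v b = 0\<^sub>v n"
    using v(3) four_block_row_mult_vec[OF BP(1) BQ(1) a b] unfolding M_def ab by simp
  moreover have "a \<noteq> 0\<^sub>v r \<or> b \<noteq> 0\<^sub>v s" using v(2) unfolding ab by auto
  ultimately show ?thesis
    using common_fixed_vector_of_relation[OF P(1) BP(2,1,3) Q(1) BQ(2,1,3) a b] by blast
qed

lemma common_fixed_vector_of_opposite:
  fixes P Q :: "complex mat"
  assumes Q: "Q \<in> carrier_mat n n" and u: "u \<in> carrier_vec n" "P *\<^sub>v u = u"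
    and w: "w \<in> carrier_vec n" "Q *\<^sub>v w = w" and sum: "u + w = 0\<^sub>v n" and nz: "u \<noteq> 0\<^sub>v n \<or> w \<noteq> 0\<^sub>v n"
  shows "common_fixed_vector n P Q"
proof -
  have wu: "w = - u" using sum u(1) w(1) by (auto simp: vec_eq_iff add_eq_0_iff)
  have "Q *\<^sub>v u = - (Q *\<^sub>v w)" unfolding wu using Q u(1) by (intro eq_vecI) auto
  hence "Q *\<^sub>v u = u" using w(2) unfolding wu by simp
  moreover have "u \<noteq> 0\<^sub>v n" using nz unfolding wu by auto
  ultimately show ?thesis unfolding common_fixed_vector_def using u by blast
qed

lemma orth_projD:
  assumes "orth_proj n A"
  shows "A \<in> carrier_mat n n" "A * A = A" "mat_adjoint A = A"
  using assms unfolding orth_proj_def by auto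

lemma hermitian_inner_commute:
  fixes P :: "complex mat"
  assumes P: "P \<in> carrier_mat n n" "mat_adjoint P = P"
    and x: "x \<in> carrier_vec n" and y: "y \<in> carrier_vec n"
  shows "(P *\<^sub>v x) \<bullet>c y = x \<bullet>c (P *\<^sub>v y)"
proof -
  have herm: "cnj (P $$ (j,i)) = P $$ (i,j)" if "i < n" "j < n" for i j
  proof -
    have "mat_adjoint P $$ (i,j) = cnj (P $$ (j,i))"
      using P(1) that by (simp add: mat_adjoint_def mat_of_rows_def)
    thus ?thesis using P(2) by simp
  qed
  have "(P *\<^sub>v x) \<bullet>c y = (\<Sum>i<n. \<Sum>j<n. P $$ (i,j) * x $ j * cnj (y $ i))"
    using P x y by (simp add: scalar_prod_def lessThan_atLeast0 sum_distrib_right)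
  also have "\<dots> = (\<Sum>j<n. \<Sum>i<n. P $$ (i,j) * x $ j * cnj (y $ i))"
    by (rule sum.swap)
  also have "\<dots> = (\<Sum>j<n. x $ j * cnj (\<Sum>i<n. P $$ (j,i) * y $ i))"
    by (intro sum.cong refl) (simp add: sum_distrib_left cnj_sum herm algebra_simps)
  also have "\<dots> = x \<bullet>c (P *\<^sub>v y)"
    using P x y by (simp add: scalar_prod_def lessThan_atLeast0)
  finally show ?thesis .
qed

lemma orth_proj_fixed_orth_null:
  assumes P: "orth_proj n P" and y: "y \<in> carrier_vec n" "P *\<^sub>v y = y"
    and w: "w \<in> carrier_vec n" "P *\<^sub>v w = 0\<^sub>v n"
  shows "y \<bullet>c w = 0"
  using hermitian_inner_commute[OF orth_projD(1,3)[OF P] y(1) w(1)] y w by simp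

lemma orth_proj_inner_self:
  assumes P: "orth_proj n P" and x: "x \<in> carrier_vec n"
  shows "(P *\<^sub>v x) \<bullet>c x = (P *\<^sub>v x) \<bullet>c (P *\<^sub>v x)"
proof -
  have "P *\<^sub>v (P *\<^sub>v x) = P *\<^sub>v x"
    using orth_projD[OF P] x by (metis assoc_mult_mat_vec)
  thus ?thesis
    using hermitian_inner_commute[OF orth_projD(1,3)[OF P] _ x, of "P *\<^sub>v x"] orth_projD(1)[OF P] x
    by simp
qed

lemma orth_proj_sum_null_iff:
  assumes P: "orth_proj n P" and Q: "orth_proj n Q" and x: "x \<in> carrier_vec n"
  shows "(P + Q) *\<^sub>v x = 0\<^sub>v n \<longleftrightarrow> P *\<^sub>v x = 0\<^sub>v n \<and> Q *\<^sub>v x = 0\<^sub>v n"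
proof
  have Pc: "P \<in> carrier_mat n n" and Qc: "Q \<in> carrier_mat n n" using P Q by (auto dest: orth_projD)
  thus "P *\<^sub>v x = 0\<^sub>v n \<and> Q *\<^sub>v x = 0\<^sub>v n \<Longrightarrow> (P + Q) *\<^sub>v x = 0\<^sub>v n"
    using x by (simp add: add_mult_distrib_mat_vec)
  assume "(P + Q) *\<^sub>v x = 0\<^sub>v n"
  hence "0 = ((P + Q) *\<^sub>v x) \<bullet>c x" using x by simp
  also have "\<dots> = (P *\<^sub>v x) \<bullet>c (P *\<^sub>v x) + (Q *\<^sub>v x) \<bullet>c (Q *\<^sub>v x)"
    using Pc Qc x orth_proj_inner_self[OF P x] orth_proj_inner_self[OF Q x]
    by (simp add: add_mult_distrib_mat_vec add_scalar_prod_distrib[of _ n])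
  finally have "(P *\<^sub>v x) \<bullet>c (P *\<^sub>v x) = 0 \<and> (Q *\<^sub>v x) \<bullet>c (Q *\<^sub>v x) = 0"
    using conjugate_square_ge_0_vec[of "P *\<^sub>v x"] conjugate_square_ge_0_vec[of "Q *\<^sub>v x"]
    by (metis add_nonneg_eq_0_iff)
  thus "P *\<^sub>v x = 0\<^sub>v n \<and> Q *\<^sub>v x = 0\<^sub>v n"
    using conjugate_square_eq_0_vec[of "P *\<^sub>v x" n] conjugate_square_eq_0_vec[of "Q *\<^sub>v x" n] Pc Qc x
    by simp
qed

lemma idempotent_compl:
  fixes P :: "'a :: ring_1 mat"
  assumes P: "P \<in> carrier_mat n n" "P * P = P"
  shows "(1\<^sub>m n - P) * (1\<^sub>m n - P) = 1\<^sub>m n - P"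
proof -
  have "(1\<^sub>m n - P) * (1\<^sub>m n - P) = 1\<^sub>m n * (1\<^sub>m n - P) - P * (1\<^sub>m n - P)"
    by (rule minus_mult_distrib_mat) (use P in auto)
  also have "P * (1\<^sub>m n - P) = P * 1\<^sub>m n - P * P"
    by (rule mult_minus_distrib_mat) (use P in auto)
  finally show ?thesis using P by (intro eq_matI) auto
qed

lemma orth_proj_compl:
  assumes P: "orth_proj n P"
  shows "orth_proj n (1\<^sub>m n - P)"
proof -
  have Pc: "P \<in> carrier_mat n n" and PP: "P * P = P" and Padj: "mat_adjoint P = P"
    using orth_projD[OF P] .
  have adj_nth: "mat_adjoint A $$ (i,j) = cnj (A $$ (j,i))"
    if "A \<in> carrier_mat n n" "i < n" "j < n" for A :: "complex mat" and i j
    using that by (simp add: mat_adjoint_def mat_of_rows_def)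
  have "mat_adjoint (1\<^sub>m n - P) = 1\<^sub>m n - P"
  proof (rule eq_matI)
    fix i j assume "i < dim_row (1\<^sub>m n - P)" "j < dim_col (1\<^sub>m n - P)"
    hence ij: "i < n" "j < n" using Pc by auto
    have "1\<^sub>m n - P \<in> carrier_mat n n" using minus_carrier_mat[OF Pc] by simp
    thus "mat_adjoint (1\<^sub>m n - P) $$ (i, j) = (1\<^sub>m n - P) $$ (i, j)"
      using adj_nth[OF _ ij] adj_nth[OF Pc ij] Padj Pc ij by auto
  qed (use Pc in \<open>auto simp: mat_adjoint_def\<close>)
  thus ?thesis unfolding orth_proj_def using Pc idempotent_compl[OF Pc PP] by auto
qed

lemma compl_mult_vec:
  fixes A :: "'a :: ring_1 mat"
  assumes "A \<in> carrier_mat n n" "x \<in> carrier_vec n"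
  shows "(1\<^sub>m n - A) *\<^sub>v x = x - A *\<^sub>v x"
  using minus_mult_distrib_mat_vec[OF one_carrier_mat assms] assms(2) by simp

lemma compl_mult_vec_fixed_iff:
  fixes A :: "'a :: ring_1 mat"
  assumes "A \<in> carrier_mat n n" "x \<in> carrier_vec n"
  shows "(1\<^sub>m n - A) *\<^sub>v x = x \<longleftrightarrow> A *\<^sub>v x = 0\<^sub>v n"
  using compl_mult_vec[OF assms] assms by (auto simp: vec_eq_iff)

lemma compl_mult_vec_null_iff:
  fixes A :: "'a :: ring_1 mat"
  assumes "A \<in> carrier_mat n n" "x \<in> carrier_vec n"
  shows "(1\<^sub>m n - A) *\<^sub>v x = 0\<^sub>v n \<longleftrightarrow> A *\<^sub>v x = x"
  using compl_mult_vec[OF assms] assms by (auto simp: vec_eq_iff)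

lemma idempotent_mult_vec_minus_fixed:
  fixes A :: "'a :: comm_ring_1 mat"
  assumes A: "A \<in> carrier_mat n n" "A * A = A" and g: "g \<in> carrier_vec n" "A *\<^sub>v g = g"
    and x: "x \<in> carrier_vec n"
  shows "A *\<^sub>v (g - A *\<^sub>v x) = g - A *\<^sub>v x"
proof -
  have "A *\<^sub>v (g - A *\<^sub>v x) = A *\<^sub>v g - A *\<^sub>v (A *\<^sub>v x)"
    using mult_minus_distrib_mat_vec[OF A(1) g(1)] A(1) x by simp
  also have "A *\<^sub>v (A *\<^sub>v x) = A *\<^sub>v x" using assoc_mult_mat_vec[OF A(1) A(1) x] A(2) by simp
  finally show ?thesis using g(2) by simp
qed

lemma conjugate_square_sum4_eq_0:
  fixes d1 d2 d3 d4 :: "complex vec"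
  assumes d: "d1 \<in> carrier_vec n" "d2 \<in> carrier_vec n" "d3 \<in> carrier_vec n" "d4 \<in> carrier_vec n"
  shows "d1 \<bullet>c d1 + d2 \<bullet>c d2 + d3 \<bullet>c d3 + d4 \<bullet>c d4 = 0 \<longleftrightarrow>
    d1 = 0\<^sub>v n \<and> d2 = 0\<^sub>v n \<and> d3 = 0\<^sub>v n \<and> d4 = 0\<^sub>v n"
proof -
  have "d1 \<bullet>c d1 + d2 \<bullet>c d2 + d3 \<bullet>c d3 + d4 \<bullet>c d4 = 0 \<longleftrightarrow>
      d1 \<bullet>c d1 = 0 \<and> d2 \<bullet>c d2 = 0 \<and> d3 \<bullet>c d3 = 0 \<and> d4 \<bullet>c d4 = 0"
    using conjugate_square_ge_0_vec[of d1] conjugate_square_ge_0_vec[of d2]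
      conjugate_square_ge_0_vec[of d3] conjugate_square_ge_0_vec[of d4]
    by (smt (verit) add_nonneg_eq_0_iff add_nonneg_nonneg)
  thus ?thesis using d by simp
qed

lemma inner_sum4_right:
  fixes x w1 w2 w3 w4 :: "complex vec"
  assumes "x \<in> carrier_vec n" "w1 \<in> carrier_vec n" "w2 \<in> carrier_vec n" "w3 \<in> carrier_vec n"
    "w4 \<in> carrier_vec n"
  shows "x \<bullet>c (w1 + w2 + w3 + w4) = x \<bullet>c w1 + x \<bullet>c w2 + x \<bullet>c w3 + x \<bullet>c w4"
  using assms by (simp add: conjugate_add_vec[of _ n] scalar_prod_add_distrib[of _ n])

lemma rank_compl_idempotent:
  fixes P :: "complex mat"
  assumes P: "P \<in> carrier_mat n n" "P * P = P"
  shows "rk n (1\<^sub>m n - P) + rk n P = n"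
proof (rule antisym)
  have "rk n (1\<^sub>m n :: complex mat) = n"
    unfolding rk_def using vec_space.det_rank_iff[of "1\<^sub>m n :: complex mat" n] by simp
  moreover have "(1\<^sub>m n - P) + P = 1\<^sub>m n" using P by (intro eq_matI) auto
  ultimately show "n \<le> rk n (1\<^sub>m n - P) + rk n P"
    using vec_space.rank_subadditive[of "1\<^sub>m n - P" n n P] P unfolding rk_def
    by (metis minus_carrier_mat one_carrier_mat)
  show "rk n (1\<^sub>m n - P) + rk n P \<le> n"
  proof (rule ccontr)
    assume "\<not> ?thesis"
    then obtain v where "v \<in> carrier_vec n" "v \<noteq> 0\<^sub>v n" "(1\<^sub>m n - P) *\<^sub>v v = v" "P *\<^sub>v v = v"
      using common_fixed_vector_if_rank_gt[OF minus_carrier_mat[OF P(1)] idempotent_compl[OF P] P]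
      unfolding common_fixed_vector_def by auto
    thus False using compl_mult_vec_fixed_iff[OF P(1)] by force
  qed
qed

text \<open>A nonzero w with P w = Q w = 0 is orthogonal to ran P + ran Q, so adjoining it to bases of
  ran P and ran Q gives more than n vectors whose only relations involve ran P and ran Q alone.\<close>

lemma orth_null_coefficient_zero:
  assumes P: "orth_proj n P" and Q: "orth_proj n Q"
    and y: "y \<in> carrier_vec n" "P *\<^sub>v y = y" and z: "z \<in> carrier_vec n" "Q *\<^sub>v z = z"
    and w: "w \<in> carrier_vec n" "w \<noteq> 0\<^sub>v n" "P *\<^sub>v w = 0\<^sub>v n" "Q *\<^sub>v w = 0\<^sub>v n"
    and rel: "y + (z + t \<cdot>\<^sub>v w) = 0\<^sub>v n"
  shows "t = 0"
proof -
  have "(y + (z + t \<cdot>\<^sub>v w)) \<bullet>c w = y \<bullet>c w + (z \<bullet>c w + t * (w \<bullet>c w))"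
    using y z w(1) by (simp add: add_scalar_prod_distrib[of _ n])
  moreover have "y \<bullet>c w = 0" by (rule orth_proj_fixed_orth_null[OF P y w(1,3)])
  moreover have "z \<bullet>c w = 0" by (rule orth_proj_fixed_orth_null[OF Q z w(1,4)])
  ultimately have "t * (w \<bullet>c w) = 0" using rel w(1) by simp
  thus "t = 0" using w(1,2) by simp
qed

lemma common_fixed_vector_if_common_null_vector:
  assumes P: "orth_proj n P" and Q: "orth_proj n Q"
    and rk: "n \<le> rk n P + rk n Q" and "common_null_vector n P Q"
  shows "common_fixed_vector n P Q"
proof -
  obtain w where w: "w \<in> carrier_vec n" "w \<noteq> 0\<^sub>v n" "P *\<^sub>v w = 0\<^sub>v n" "Q *\<^sub>v w = 0\<^sub>v n"
    using assms(4) unfolding common_null_vector_def by blast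
  have Pc: "P \<in> carrier_mat n n" and Qc: "Q \<in> carrier_mat n n" using P Q by (auto dest: orth_projD)
  define r s where "r = rk n P" and "s = rk n Q"
  obtain BP where BP: "BP \<in> carrier_mat n r" "P * BP = BP"
      "\<forall>a\<in>carrier_vec r. BP *\<^sub>v a = 0\<^sub>v n \<longrightarrow> a = 0\<^sub>v r"
    using idempotent_range_basis[OF orth_projD(1,2)[OF P]] unfolding r_def by blast
  obtain BQ where BQ: "BQ \<in> carrier_mat n s" "Q * BQ = BQ"
      "\<forall>b\<in>carrier_vec s. BQ *\<^sub>v b = 0\<^sub>v n \<longrightarrow> b = 0\<^sub>v s"
    using idempotent_range_basis[OF orth_projD(1,2)[OF Q]] unfolding s_def by blast
  define W where "W = mat n 1 (\<lambda>(i,j). w $ i)"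
  have W: "W \<in> carrier_mat n 1" unfolding W_def by simp
  define BQW where "BQW = four_block_mat BQ W (0\<^sub>m 0 s) (0\<^sub>m 0 1)"
  have BQW: "BQW \<in> carrier_mat n (s + 1)" unfolding BQW_def by (rule four_block_row_carrier[OF BQ(1)])
  define M where "M = four_block_mat BP BQW (0\<^sub>m 0 r) (0\<^sub>m 0 (s + 1))"
  obtain v where v: "v \<in> carrier_vec (r + (s + 1))" "v \<noteq> 0\<^sub>v (r + (s + 1))" "M *\<^sub>v v = 0\<^sub>v n"
    using mat_wide_kernel_nonzero[OF four_block_row_carrier[OF BP(1), of BQW "s + 1"]] rk
    unfolding M_def r_def s_def by auto
  define a b t where "a = vec_first v r" and "b = vec_first (vec_last v (s + 1)) s"
    and "t = vec_last (vec_last v (s + 1)) 1"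
  have abt: "v = a @\<^sub>v (b @\<^sub>v t)" and a: "a \<in> carrier_vec r" and b: "b \<in> carrier_vec s"
    and t: "t \<in> carrier_vec 1"
    using v(1) unfolding a_def b_def t_def by auto
  define y z where "y = BP *\<^sub>v a" and "z = BQ *\<^sub>v b"
  have yz: "y \<in> carrier_vec n" "z \<in> carrier_vec n" using BP(1) BQ(1) a b unfolding y_def z_def by auto
  have "W *\<^sub>v t = (t $ 0) \<cdot>\<^sub>v w"
    by (rule eq_vecI) (use w(1) t in \<open>auto simp: W_def scalar_prod_def\<close>)
  hence rel: "y + (z + (t $ 0) \<cdot>\<^sub>v w) = 0\<^sub>v n"
    using v(3) four_block_row_mult_vec[OF BP(1) BQW a append_carrier_vec[OF b t]]
      four_block_row_mult_vec[OF BQ(1) W b t]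
    unfolding M_def BQW_def abt y_def z_def by simp
  have "t $ 0 = 0"
    by (rule orth_null_coefficient_zero[OF P Q yz(1) _ yz(2) _ w rel])
      (use assoc_mult_mat_vec[OF Pc BP(1) a] BP(2) assoc_mult_mat_vec[OF Qc BQ(1) b] BQ(2)
        in \<open>simp_all add: y_def z_def\<close>)
  hence t0: "t = 0\<^sub>v 1" using t by (intro eq_vecI) auto
  have "(t $ 0) \<cdot>\<^sub>v w = 0\<^sub>v n" using \<open>t $ 0 = 0\<close> w(1) by (intro eq_vecI) auto
  hence "BP *\<^sub>v a + BQ *\<^sub>v b = 0\<^sub>v n" using rel yz unfolding y_def z_def by simp
  moreover have "a \<noteq> 0\<^sub>v r \<or> b \<noteq> 0\<^sub>v s" using v(2) unfolding abt t0 by auto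
  ultimately show ?thesis
    using common_fixed_vector_of_relation[OF Pc BP(2,1,3) Qc BQ(2,1,3) a b] by blast
qed

lemma common_null_vector_if_common_fixed_vector:
  assumes P: "orth_proj n P" and Q: "orth_proj n Q"
    and rk: "rk n P + rk n Q \<le> n" and fixed: "common_fixed_vector n P Q"
  shows "common_null_vector n P Q"
proof -
  have Pc: "P \<in> carrier_mat n n" and Qc: "Q \<in> carrier_mat n n" using P Q by (auto dest: orth_projD)
  have "n \<le> rk n (1\<^sub>m n - P) + rk n (1\<^sub>m n - Q)"
    using rank_compl_idempotent[OF orth_projD(1,2)[OF P]] rank_compl_idempotent[OF orth_projD(1,2)[OF Q]] rk
    by linarith
  moreover have "common_null_vector n (1\<^sub>m n - P) (1\<^sub>m n - Q)"
    using fixed compl_mult_vec_null_iff[OF Pc] compl_mult_vec_null_iff[OF Qc]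
    unfolding common_fixed_vector_def common_null_vector_def by blast
  ultimately have "common_fixed_vector n (1\<^sub>m n - P) (1\<^sub>m n - Q)"
    using common_fixed_vector_if_common_null_vector[OF orth_proj_compl[OF P] orth_proj_compl[OF Q]] by blast
  thus ?thesis
    using compl_mult_vec_fixed_iff[OF Pc] compl_mult_vec_fixed_iff[OF Qc]
    unfolding common_fixed_vector_def common_null_vector_def by blast
qed

text \<open>When the ranks add up to n, ran P \<inter> ran Q and ker P \<inter> ker Q have the same dimension.\<close>

lemma common_fixed_vector_iff_common_null_vector:
  assumes "orth_proj n P" "orth_proj n Q" "rk n P + rk n Q = n"
  shows "common_fixed_vector n P Q \<longleftrightarrow> common_null_vector n P Q"
  using common_fixed_vector_if_common_null_vector[OF assms(1,2)]
    common_null_vector_if_common_fixed_vector[OF assms(1,2)] assms(3) by auto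

lemma rep_orth_proj:
  assumes "is_rep n \<alpha> P" "i \<in> {1..4}"
  shows "orth_proj n (P i)"
  using assms unfolding is_rep_def orth_proj_def by auto

lemma rep_carrier_mat:
  assumes "is_rep n \<alpha> P" "i \<in> {1..4}"
  shows "P i \<in> carrier_mat n n"
  using orth_projD(1)[OF rep_orth_proj[OF assms]] .

lemma rep_mult_vec:
  assumes rep: "is_rep n \<alpha> P" and x: "x \<in> carrier_vec n"
  shows "P 1 *\<^sub>v x + P 2 *\<^sub>v x + P 3 *\<^sub>v x + P 4 *\<^sub>v x = of_real \<alpha> \<cdot>\<^sub>v x"
proof -
  have c: "P i \<in> carrier_mat n n" if "i \<in> {1..4}" for i using rep_carrier_mat[OF rep that] .
  have "(P 1 + P 2 + P 3 + P 4) *\<^sub>v x = P 1 *\<^sub>v x + P 2 *\<^sub>v x + P 3 *\<^sub>v x + P 4 *\<^sub>v x"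
    using c x by (simp add: add_mult_distrib_mat_vec[of _ n n])
  moreover have "(of_real \<alpha> \<cdot>\<^sub>m 1\<^sub>m n) *\<^sub>v x = (of_real \<alpha> :: complex) \<cdot>\<^sub>v x"
    by (rule eq_vecI) (use x in auto)
  ultimately show ?thesis using rep unfolding is_rep_def by simp
qed

lemma rep_mult_vec_nth:
  assumes rep: "is_rep n \<alpha> P" and x: "x \<in> carrier_vec n" and j: "j < n"
  shows "(P 1 *\<^sub>v x) $ j + (P 2 *\<^sub>v x) $ j + (P 3 *\<^sub>v x) $ j + (P 4 *\<^sub>v x) $ j = of_real \<alpha> * x $ j"
proof -
  have "(P 1 *\<^sub>v x + P 2 *\<^sub>v x + P 3 *\<^sub>v x + P 4 *\<^sub>v x) $ j = (of_real \<alpha> \<cdot>\<^sub>v x) $ j"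
    using rep_mult_vec[OF rep x] by simp
  moreover have "P 1 \<in> carrier_mat n n" "P 2 \<in> carrier_mat n n" "P 3 \<in> carrier_mat n n"
    "P 4 \<in> carrier_mat n n" using rep_carrier_mat[OF rep] by auto
  ultimately show ?thesis using x j by simp
qed

lemma mem_Lam_iff:
  assumes c3: "P 3 \<in> carrier_mat n n" and c4: "P 4 \<in> carrier_mat n n"
  shows "l \<in> Lam P \<longleftrightarrow>
    (\<exists>x\<in>carrier_vec n. x \<noteq> 0\<^sub>v n \<and> (\<forall>j<n. (P 3 *\<^sub>v x) $ j + (P 4 *\<^sub>v x) $ j = l * x $ j))"
proof -
  have "(P 3 + P 4) *\<^sub>v x = l \<cdot>\<^sub>v x \<longleftrightarrow> (\<forall>j<n. (P 3 *\<^sub>v x) $ j + (P 4 *\<^sub>v x) $ j = l * x $ j)"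
    if x: "x \<in> carrier_vec n" for x
    using add_mult_distrib_mat_vec[OF c3 c4 x] c3 c4 x by (auto simp: vec_eq_iff)
  moreover have "dim_row (P 3 + P 4) = n" using c3 c4 by simp
  ultimately show ?thesis unfolding Lam_def eigenvalue_def eigenvector_def by auto
qed

lemma zero_mem_Lam_iff:
  assumes rep: "is_rep n \<alpha> P"
  shows "0 \<in> Lam P \<longleftrightarrow> common_null_vector n (P 3) (P 4)"
proof -
  have c: "P 3 \<in> carrier_mat n n" "P 4 \<in> carrier_mat n n" using rep_carrier_mat[OF rep] by auto
  have "(\<forall>j<n. (P 3 *\<^sub>v x) $ j + (P 4 *\<^sub>v x) $ j = 0 * x $ j) \<longleftrightarrow> P 3 *\<^sub>v x = 0\<^sub>v n \<and> P 4 *\<^sub>v x = 0\<^sub>v n"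
    if x: "x \<in> carrier_vec n" for x
    using orth_proj_sum_null_iff[OF rep_orth_proj[OF rep] rep_orth_proj[OF rep] x, of 3 4]
      add_mult_distrib_mat_vec[OF c x] c x by (auto simp: vec_eq_iff)
  thus ?thesis unfolding mem_Lam_iff[OF c] common_null_vector_def by auto
qed

lemma alpha_mem_Lam_iff:
  assumes rep: "is_rep n \<alpha> P"
  shows "of_real \<alpha> \<in> Lam P \<longleftrightarrow> common_null_vector n (P 1) (P 2)"
proof -
  have c: "P 1 \<in> carrier_mat n n" "P 2 \<in> carrier_mat n n" "P 3 \<in> carrier_mat n n" "P 4 \<in> carrier_mat n n"
    using rep_carrier_mat[OF rep] by auto
  have "(\<forall>j<n. (P 3 *\<^sub>v x) $ j + (P 4 *\<^sub>v x) $ j = of_real \<alpha> * x $ j) \<longleftrightarrow> P 1 *\<^sub>v x = 0\<^sub>v n \<and> P 2 *\<^sub>v x = 0\<^sub>v n"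
    if x: "x \<in> carrier_vec n" for x
  proof -
    have "(P 3 *\<^sub>v x) $ j + (P 4 *\<^sub>v x) $ j = of_real \<alpha> * x $ j - ((P 1 *\<^sub>v x) $ j + (P 2 *\<^sub>v x) $ j)"
      if "j < n" for j
      using rep_mult_vec_nth[OF rep x that] by (simp add: algebra_simps)
    hence "(\<forall>j<n. (P 3 *\<^sub>v x) $ j + (P 4 *\<^sub>v x) $ j = of_real \<alpha> * x $ j) \<longleftrightarrow> (P 1 + P 2) *\<^sub>v x = 0\<^sub>v n"
      unfolding add_mult_distrib_mat_vec[OF c(1,2) x] using c x by (auto simp: vec_eq_iff add_eq_0_iff)
    thus ?thesis using orth_proj_sum_null_iff[OF rep_orth_proj[OF rep] rep_orth_proj[OF rep] x, of 1 2] by simp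
  qed
  thus ?thesis unfolding mem_Lam_iff[OF c(3,4)] common_null_vector_def by auto
qed

lemma rep_lin_refl:
  assumes rep: "is_rep n \<alpha> P"
  shows "is_rep n (4 - \<alpha>) (lin_refl n P)"
proof -
  have c: "P 1 \<in> carrier_mat n n" "P 2 \<in> carrier_mat n n" "P 3 \<in> carrier_mat n n" "P 4 \<in> carrier_mat n n"
    using rep_carrier_mat[OF rep] by auto
  have sum: "P 1 $$ (i,j) + P 2 $$ (i,j) + P 3 $$ (i,j) + P 4 $$ (i,j) = of_real \<alpha> * (if i = j then 1 else 0)"
    if "i < n" "j < n" for i j
  proof -
    have "(P 1 + P 2 + P 3 + P 4) $$ (i,j) = (of_real \<alpha> \<cdot>\<^sub>m 1\<^sub>m n :: complex mat) $$ (i,j)"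
      using rep unfolding is_rep_def by simp
    thus ?thesis using that c by simp
  qed
  have "lin_refl n P 1 + lin_refl n P 2 + lin_refl n P 3 + lin_refl n P 4 = of_real (4 - \<alpha>) \<cdot>\<^sub>m 1\<^sub>m n"
  proof (rule eq_matI)
    fix i j assume "i < dim_row (of_real (4 - \<alpha>) \<cdot>\<^sub>m 1\<^sub>m n :: complex mat)"
      "j < dim_col (of_real (4 - \<alpha>) \<cdot>\<^sub>m 1\<^sub>m n :: complex mat)"
    hence ij: "i < n" "j < n" by auto
    have "(lin_refl n P 1 + lin_refl n P 2 + lin_refl n P 3 + lin_refl n P 4) $$ (i,j)
        = 4 * (if i = j then 1 else 0) - (P 1 $$ (i,j) + P 2 $$ (i,j) + P 3 $$ (i,j) + P 4 $$ (i,j))"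
      unfolding lin_refl_def using ij c by (simp add: algebra_simps)
    thus "(lin_refl n P 1 + lin_refl n P 2 + lin_refl n P 3 + lin_refl n P 4) $$ (i,j)
        = (of_real (4 - \<alpha>) \<cdot>\<^sub>m 1\<^sub>m n :: complex mat) $$ (i,j)"
      unfolding sum[OF ij] using ij by (simp add: algebra_simps)
  qed (unfold lin_refl_def, use c in auto)
  moreover have "orth_proj n (lin_refl n P i)" if "i \<in> {1..4}" for i
    unfolding lin_refl_def using orth_proj_compl[OF rep_orth_proj[OF rep that]] .
  ultimately show ?thesis unfolding is_rep_def orth_proj_def by blast
qed

lemma rank_lin_refl:
  assumes rep: "is_rep n \<alpha> P" and i: "i \<in> {1..4}"
  shows "rk n (lin_refl n P i) + rk n (P i) = n"
  unfolding lin_refl_def using rank_compl_idempotent orth_projD[OF rep_orth_proj[OF rep i]] by auto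

lemma Lam_lin_refl:
  assumes rep: "is_rep n \<alpha> P"
  shows "Lam (lin_refl n P) = (\<lambda>l. 2 - l) ` Lam P"
proof -
  have c: "P 3 \<in> carrier_mat n n" "P 4 \<in> carrier_mat n n" using rep_carrier_mat[OF rep] by auto
  hence t: "lin_refl n P 3 \<in> carrier_mat n n" "lin_refl n P 4 \<in> carrier_mat n n"
    unfolding lin_refl_def by auto
  have iff: "m \<in> Lam (lin_refl n P) \<longleftrightarrow> 2 - m \<in> Lam P" for m
  proof -
    have "(\<forall>j<n. (lin_refl n P 3 *\<^sub>v x) $ j + (lin_refl n P 4 *\<^sub>v x) $ j = m * x $ j)
        \<longleftrightarrow> (\<forall>j<n. (P 3 *\<^sub>v x) $ j + (P 4 *\<^sub>v x) $ j = (2 - m) * x $ j)" if x: "x \<in> carrier_vec n" for x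
      using compl_mult_vec[OF c(1) x] compl_mult_vec[OF c(2) x] c x
      unfolding lin_refl_def by (auto simp: algebra_simps)
    thus ?thesis unfolding mem_Lam_iff[OF t] mem_Lam_iff[OF c] by blast
  qed
  show ?thesis
  proof (rule Set.set_eqI)
    fix m :: complex
    have "m = 2 - (2 - m)" by simp
    thus "m \<in> Lam (lin_refl n P) \<longleftrightarrow> m \<in> (\<lambda>l. 2 - l) ` Lam P" using iff by force
  qed
qed

lemma mem_ranM_iff:
  fixes A :: "complex mat"
  assumes A: "A \<in> carrier_mat n n" "A * A = A"
  shows "v \<in> ranM n A \<longleftrightarrow> v \<in> carrier_vec n \<and> A *\<^sub>v v = v"
proof
  assume "v \<in> ranM n A"
  then obtain y where y: "y \<in> carrier_vec n" "v = A *\<^sub>v y" unfolding ranM_def by auto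
  have "A *\<^sub>v v = (A * A) *\<^sub>v y" using y A(1) by (simp add: assoc_mult_mat_vec)
  thus "v \<in> carrier_vec n \<and> A *\<^sub>v v = v" using A y by auto
next
  assume "v \<in> carrier_vec n \<and> A *\<^sub>v v = v"
  hence "v = A *\<^sub>v v \<and> v \<in> carrier_vec n" by simp
  thus "v \<in> ranM n A" unfolding ranM_def by blast
qed

text \<open>Since u is an isometry, K = ran (I - u u* ) is the kernel of u* in the direct sum: the
  tuples k with k i \<in> ran (P i) summing to zero.\<close>

definition in_ker_u_adj :: "nat \<Rightarrow> (nat \<Rightarrow> complex mat) \<Rightarrow> (nat \<Rightarrow> complex vec) \<Rightarrow> bool" where
  "in_ker_u_adj n P k \<longleftrightarrow>
     k 1 \<in> carrier_vec n \<and> k 2 \<in> carrier_vec n \<and> k 3 \<in> carrier_vec n \<and> k 4 \<in> carrier_vec n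
     \<and> P 1 *\<^sub>v k 1 = k 1 \<and> P 2 *\<^sub>v k 2 = k 2 \<and> P 3 *\<^sub>v k 3 = k 3 \<and> P 4 *\<^sub>v k 4 = k 4
     \<and> (\<forall>i. i \<notin> {1..4} \<longrightarrow> k i = 0\<^sub>v n) \<and> k 1 + k 2 + k 3 + k 4 = 0\<^sub>v n"

definition tuple4 :: "nat \<Rightarrow> complex vec \<Rightarrow> complex vec \<Rightarrow> complex vec \<Rightarrow> complex vec \<Rightarrow> nat \<Rightarrow> complex vec" where
  "tuple4 n k1 k2 k3 k4 =
     (\<lambda>i. if i = 1 then k1 else if i = 2 then k2 else if i = 3 then k3 else if i = 4 then k4 else 0\<^sub>v n)"

lemma tuple4_simps [simp]:
  "tuple4 n k1 k2 k3 k4 1 = k1" "tuple4 n k1 k2 k3 k4 2 = k2" "tuple4 n k1 k2 k3 k4 3 = k3"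
  "tuple4 n k1 k2 k3 k4 4 = k4" "tuple4 n k1 k2 k3 k4 (Suc 0) = k1"
  by (auto simp: tuple4_def)

lemma in_ker_u_adj_carrier:
  assumes "in_ker_u_adj n P k"
  shows "k i \<in> carrier_vec n"
proof (cases "i \<in> {1..4}")
  case True
  hence "i = 1 \<or> i = 2 \<or> i = 3 \<or> i = 4" by auto
  thus ?thesis using assms unfolding in_ker_u_adj_def by auto
qed (use assms in \<open>auto simp: in_ker_u_adj_def\<close>)

lemma in_ker_u_adj_fixed:
  assumes "in_ker_u_adj n P k" "i \<in> {1..4}"
  shows "P i *\<^sub>v k i = k i"
proof -
  have "i = 1 \<or> i = 2 \<or> i = 3 \<or> i = 4" using assms(2) by auto
  thus ?thesis using assms(1) unfolding in_ker_u_adj_def by auto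
qed

lemma in_ker_u_adj_tuple4_iff:
  "in_ker_u_adj n P (tuple4 n k1 k2 k3 k4) \<longleftrightarrow>
     k1 \<in> carrier_vec n \<and> k2 \<in> carrier_vec n \<and> k3 \<in> carrier_vec n \<and> k4 \<in> carrier_vec n
     \<and> P 1 *\<^sub>v k1 = k1 \<and> P 2 *\<^sub>v k2 = k2 \<and> P 3 *\<^sub>v k3 = k3 \<and> P 4 *\<^sub>v k4 = k4
     \<and> k1 + k2 + k3 + k4 = 0\<^sub>v n"
  unfolding in_ker_u_adj_def by (auto simp: tuple4_def)

text \<open>The tuple below is (I - u u* ) g, since u u* g = (P i x) with x = (g 1 + g 2 + g 3 + g 4) / \<alpha>.\<close>

lemma compl_range_u_in_ker_u_adj:
  assumes rep: "is_rep n \<alpha> P" and pos: "\<alpha> > 0"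
    and g: "g1 \<in> carrier_vec n" "g2 \<in> carrier_vec n" "g3 \<in> carrier_vec n" "g4 \<in> carrier_vec n"
    and gP: "P 1 *\<^sub>v g1 = g1" "P 2 *\<^sub>v g2 = g2" "P 3 *\<^sub>v g3 = g3" "P 4 *\<^sub>v g4 = g4"
  defines "x \<equiv> complex_of_real (1 / \<alpha>) \<cdot>\<^sub>v (g1 + g2 + g3 + g4)"
  shows "in_ker_u_adj n P (tuple4 n (g1 - P 1 *\<^sub>v x) (g2 - P 2 *\<^sub>v x) (g3 - P 3 *\<^sub>v x) (g4 - P 4 *\<^sub>v x))"
proof -
  have P: "P i \<in> carrier_mat n n" "P i * P i = P i" if "i \<in> {1..4}" for i
    using orth_projD[OF rep_orth_proj[OF rep that]] by auto
  have x: "x \<in> carrier_vec n" using g unfolding x_def by auto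
  have "(g1 - P 1 *\<^sub>v x) + (g2 - P 2 *\<^sub>v x) + (g3 - P 3 *\<^sub>v x) + (g4 - P 4 *\<^sub>v x) = 0\<^sub>v n"
  proof (rule eq_vecI)
    fix j assume "j < dim_vec (0\<^sub>v n :: complex vec)"
    hence j: "j < n" by simp
    have "((g1 - P 1 *\<^sub>v x) + (g2 - P 2 *\<^sub>v x) + (g3 - P 3 *\<^sub>v x) + (g4 - P 4 *\<^sub>v x)) $ j
        = (g1 $ j + g2 $ j + g3 $ j + g4 $ j)
          - ((P 1 *\<^sub>v x) $ j + (P 2 *\<^sub>v x) $ j + (P 3 *\<^sub>v x) $ j + (P 4 *\<^sub>v x) $ j)"
      using j g P[of 1] P[of 2] P[of 3] P[of 4] x by simp
    also have "\<dots> = 0" unfolding rep_mult_vec_nth[OF rep x j] using j g pos unfolding x_def by simp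
    finally show "((g1 - P 1 *\<^sub>v x) + (g2 - P 2 *\<^sub>v x) + (g3 - P 3 *\<^sub>v x) + (g4 - P 4 *\<^sub>v x)) $ j
        = 0\<^sub>v n $ j" using j by simp
  qed (use x P[of 4] in auto)
  thus ?thesis unfolding in_ker_u_adj_tuple4_iff
    using g gP x P[of 1] P[of 2] P[of 3] P[of 4] idempotent_mult_vec_minus_fixed by auto
qed

lemma hat_K_imp_in_ker_u_adj:
  assumes rep: "is_rep n \<alpha> P" and pos: "\<alpha> > 0" and k: "k \<in> hat_K n \<alpha> P"
  shows "in_ker_u_adj n P k"
proof -
  obtain h where kh: "k = (\<lambda>i. h i - hat_u n \<alpha> P (hat_u_adj \<alpha> h) i)" and h: "h \<in> hat_space n P"
    using k unfolding hat_K_def by blast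
  have hP: "h i \<in> carrier_vec n" "P i *\<^sub>v h i = h i" if "i \<in> {1..4}" for i
  proof -
    have "h i \<in> ranM n (P i)" using h that unfolding hat_space_def by blast
    thus "h i \<in> carrier_vec n" "P i *\<^sub>v h i = h i"
      using mem_ranM_iff[OF orth_projD(1,2)[OF rep_orth_proj[OF rep that]]] by auto
  qed
  define x where "x = complex_of_real (1 / \<alpha>) \<cdot>\<^sub>v (h 1 + h 2 + h 3 + h 4)"
  have "(1 / sqrt \<alpha>) * (1 / sqrt \<alpha>) = 1 / \<alpha>" using pos by (simp add: real_sqrt_mult_self)
  hence "complex_of_real (1 / sqrt \<alpha>) * complex_of_real (1 / sqrt \<alpha>) = complex_of_real (1 / \<alpha>)"
    by (metis of_real_mult)
  hence "hat_u n \<alpha> P (hat_u_adj \<alpha> h) i = P i *\<^sub>v x" if "i \<in> {1..4}" for i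
    using that rep_carrier_mat[OF rep that] hP[of 1] hP[of 2] hP[of 3] hP[of 4]
    unfolding hat_u_def hat_u_adj_def x_def by (auto simp: mult_mat_vec smult_smult_assoc)
  moreover have "h i = 0\<^sub>v n" "hat_u n \<alpha> P (hat_u_adj \<alpha> h) i = 0\<^sub>v n" if "i \<notin> {1..4}" for i
    using h that unfolding hat_space_def hat_u_def by auto
  ultimately have "k = tuple4 n (h 1 - P 1 *\<^sub>v x) (h 2 - P 2 *\<^sub>v x) (h 3 - P 3 *\<^sub>v x) (h 4 - P 4 *\<^sub>v x)"
    unfolding kh tuple4_def by (auto intro!: ext)
  moreover have "h 1 \<in> carrier_vec n" "h 2 \<in> carrier_vec n" "h 3 \<in> carrier_vec n" "h 4 \<in> carrier_vec n"
    "P 1 *\<^sub>v h 1 = h 1" "P 2 *\<^sub>v h 2 = h 2" "P 3 *\<^sub>v h 3 = h 3" "P 4 *\<^sub>v h 4 = h 4"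
    using hP by auto
  ultimately show ?thesis using compl_range_u_in_ker_u_adj[OF rep pos] unfolding x_def by metis
qed

lemma in_ker_u_adj_imp_hat_K:
  assumes rep: "is_rep n \<alpha> P" and k: "in_ker_u_adj n P k"
  shows "k \<in> hat_K n \<alpha> P"
proof -
  have "k \<in> hat_space n P"
    using in_ker_u_adj_carrier[OF k] in_ker_u_adj_fixed[OF k] k
      mem_ranM_iff[OF orth_projD(1,2)[OF rep_orth_proj[OF rep]]]
    unfolding hat_space_def in_ker_u_adj_def by blast
  moreover have u0: "hat_u n \<alpha> P (hat_u_adj \<alpha> k) i = 0\<^sub>v n" for i
  proof -
    have "hat_u_adj \<alpha> k = 0\<^sub>v n" using k unfolding hat_u_adj_def in_ker_u_adj_def by auto
    moreover have "P i *\<^sub>v 0\<^sub>v n = 0\<^sub>v n" if "i \<in> {1..4}"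
      using rep_carrier_mat[OF rep that] by (intro eq_vecI) auto
    ultimately show ?thesis unfolding hat_u_def by (auto intro!: eq_vecI)
  qed
  moreover note in_ker_u_adj_carrier[OF k]
  ultimately show ?thesis unfolding hat_K_def
    by (intro CollectI exI[of _ k]) (auto simp: u0 intro!: ext)
qed

lemma hat_K_iff_in_ker_u_adj:
  assumes "is_rep n \<alpha> P" "\<alpha> > 0"
  shows "k \<in> hat_K n \<alpha> P \<longleftrightarrow> in_ker_u_adj n P k"
  using hat_K_imp_in_ker_u_adj in_ker_u_adj_imp_hat_K assms by blast

text \<open>Projecting g onto ran u gives the
  tuple (P i x) with x = (g 1 + g 2 + g 3 + g 4) / \<alpha>; the remainder lies in K and is orthogonal
  to g, hence vanishes.\<close>

lemma orth_ker_u_adj_imp_range_u: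
  assumes rep: "is_rep n \<alpha> P" and pos: "\<alpha> > 0"
    and g: "g1 \<in> carrier_vec n" "g2 \<in> carrier_vec n" "g3 \<in> carrier_vec n" "g4 \<in> carrier_vec n"
    and gP: "P 1 *\<^sub>v g1 = g1" "P 2 *\<^sub>v g2 = g2" "P 3 *\<^sub>v g3 = g3" "P 4 *\<^sub>v g4 = g4"
    and orth: "\<forall>k. in_ker_u_adj n P k \<longrightarrow> g1 \<bullet>c k 1 + g2 \<bullet>c k 2 + g3 \<bullet>c k 3 + g4 \<bullet>c k 4 = 0"
  shows "\<exists>x\<in>carrier_vec n. P 1 *\<^sub>v x = g1 \<and> P 2 *\<^sub>v x = g2 \<and> P 3 *\<^sub>v x = g3 \<and> P 4 *\<^sub>v x = g4"
proof -
  have P: "orth_proj n (P i)" if "i \<in> {1..4}" for i using rep_orth_proj[OF rep that] .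
  note c = orth_projD[OF P[of 1]] orth_projD[OF P[of 2]] orth_projD[OF P[of 3]] orth_projD[OF P[of 4]]
  define x where "x = complex_of_real (1 / \<alpha>) \<cdot>\<^sub>v (g1 + g2 + g3 + g4)"
  have x: "x \<in> carrier_vec n" using g unfolding x_def by auto
  define d1 d2 d3 d4 where "d1 = g1 - P 1 *\<^sub>v x" and "d2 = g2 - P 2 *\<^sub>v x"
    and "d3 = g3 - P 3 *\<^sub>v x" and "d4 = g4 - P 4 *\<^sub>v x"
  have "in_ker_u_adj n P (tuple4 n d1 d2 d3 d4)"
    unfolding d1_def d2_def d3_def d4_def x_def by (rule compl_range_u_in_ker_u_adj[OF rep pos g gP])
  hence d: "d1 \<in> carrier_vec n" "d2 \<in> carrier_vec n" "d3 \<in> carrier_vec n" "d4 \<in> carrier_vec n"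
    and dP: "P 1 *\<^sub>v d1 = d1" "P 2 *\<^sub>v d2 = d2" "P 3 *\<^sub>v d3 = d3" "P 4 *\<^sub>v d4 = d4"
    and dsum: "d1 + d2 + d3 + d4 = 0\<^sub>v n"
    unfolding in_ker_u_adj_tuple4_iff by auto
  from orth[rule_format, OF \<open>in_ker_u_adj n P (tuple4 n d1 d2 d3 d4)\<close>]
  have orth_g: "g1 \<bullet>c d1 + g2 \<bullet>c d2 + g3 \<bullet>c d3 + g4 \<bullet>c d4 = 0" by simp
  have "(P i *\<^sub>v x) \<bullet>c d = x \<bullet>c d" if "i \<in> {1..4}" "P i *\<^sub>v d = d" "d \<in> carrier_vec n" for i d
    using hermitian_inner_commute[OF orth_projD(1,3)[OF P[OF that(1)]] x that(3)] that(2) by simp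
  hence orth_Px: "(P 1 *\<^sub>v x) \<bullet>c d1 + (P 2 *\<^sub>v x) \<bullet>c d2 + (P 3 *\<^sub>v x) \<bullet>c d3 + (P 4 *\<^sub>v x) \<bullet>c d4 = 0"
    using dP inner_sum4_right[OF x d] dsum d x by simp
  have sq: "d \<bullet>c d = g \<bullet>c d - y \<bullet>c d"
    if "d = g - y" "g \<in> carrier_vec n" "y \<in> carrier_vec n" for d g y :: "complex vec"
    using minus_scalar_prod_distrib[of g n y "conjugate d"] that by simp
  have e: "d1 \<bullet>c d1 = g1 \<bullet>c d1 - (P 1 *\<^sub>v x) \<bullet>c d1" "d2 \<bullet>c d2 = g2 \<bullet>c d2 - (P 2 *\<^sub>v x) \<bullet>c d2"
    "d3 \<bullet>c d3 = g3 \<bullet>c d3 - (P 3 *\<^sub>v x) \<bullet>c d3" "d4 \<bullet>c d4 = g4 \<bullet>c d4 - (P 4 *\<^sub>v x) \<bullet>c d4"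
    by (rule sq; use d1_def d2_def d3_def d4_def g c x in simp)+
  have "d1 \<bullet>c d1 + d2 \<bullet>c d2 + d3 \<bullet>c d3 + d4 \<bullet>c d4
      = (g1 \<bullet>c d1 + g2 \<bullet>c d2 + g3 \<bullet>c d3 + g4 \<bullet>c d4)
        - ((P 1 *\<^sub>v x) \<bullet>c d1 + (P 2 *\<^sub>v x) \<bullet>c d2 + (P 3 *\<^sub>v x) \<bullet>c d3 + (P 4 *\<^sub>v x) \<bullet>c d4)"
    unfolding e by (simp add: algebra_simps)
  hence "d1 \<bullet>c d1 + d2 \<bullet>c d2 + d3 \<bullet>c d3 + d4 \<bullet>c d4 = 0" unfolding orth_g orth_Px by simp
  hence "d1 = 0\<^sub>v n" "d2 = 0\<^sub>v n" "d3 = 0\<^sub>v n" "d4 = 0\<^sub>v n" using conjugate_square_sum4_eq_0[OF d] by auto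
  hence "P 1 *\<^sub>v x = g1" "P 2 *\<^sub>v x = g2" "P 3 *\<^sub>v x = g3" "P 4 *\<^sub>v x = g4"
    using g c x unfolding d1_def d2_def d3_def d4_def by (auto simp: vec_eq_iff)
  thus ?thesis using x by blast
qed

lemma orth_ker_u_adj_iff_range_u:
  assumes rep: "is_rep n \<alpha> P" and pos: "\<alpha> > 0"
    and g: "g1 \<in> carrier_vec n" "g2 \<in> carrier_vec n" "g3 \<in> carrier_vec n" "g4 \<in> carrier_vec n"
    and gP: "P 1 *\<^sub>v g1 = g1" "P 2 *\<^sub>v g2 = g2" "P 3 *\<^sub>v g3 = g3" "P 4 *\<^sub>v g4 = g4"
  shows "(\<forall>k. in_ker_u_adj n P k \<longrightarrow> g1 \<bullet>c k 1 + g2 \<bullet>c k 2 + g3 \<bullet>c k 3 + g4 \<bullet>c k 4 = 0) \<longleftrightarrow>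
         (\<exists>x\<in>carrier_vec n. P 1 *\<^sub>v x = g1 \<and> P 2 *\<^sub>v x = g2 \<and> P 3 *\<^sub>v x = g3 \<and> P 4 *\<^sub>v x = g4)"
proof (intro iffI allI impI)
  fix k assume "\<exists>x\<in>carrier_vec n. P 1 *\<^sub>v x = g1 \<and> P 2 *\<^sub>v x = g2 \<and> P 3 *\<^sub>v x = g3 \<and> P 4 *\<^sub>v x = g4"
    and k: "in_ker_u_adj n P k"
  then obtain x where x: "x \<in> carrier_vec n"
    and gx: "P 1 *\<^sub>v x = g1" "P 2 *\<^sub>v x = g2" "P 3 *\<^sub>v x = g3" "P 4 *\<^sub>v x = g4" by blast
  have kc: "k 1 \<in> carrier_vec n" "k 2 \<in> carrier_vec n" "k 3 \<in> carrier_vec n" "k 4 \<in> carrier_vec n"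
    and ks: "k 1 + k 2 + k 3 + k 4 = 0\<^sub>v n" using k unfolding in_ker_u_adj_def by auto
  have "(P i *\<^sub>v x) \<bullet>c k i = x \<bullet>c k i" if "i \<in> {1..4}" for i
    using hermitian_inner_commute[OF orth_projD(1,3)[OF rep_orth_proj[OF rep that]] x, of "k i"]
      in_ker_u_adj_carrier[OF k] in_ker_u_adj_fixed[OF k that] by simp
  hence "g1 \<bullet>c k 1 + g2 \<bullet>c k 2 + g3 \<bullet>c k 3 + g4 \<bullet>c k 4 = x \<bullet>c (k 1 + k 2 + k 3 + k 4)"
    unfolding gx[symmetric] inner_sum4_right[OF x kc] by simp
  thus "g1 \<bullet>c k 1 + g2 \<bullet>c k 2 + g3 \<bullet>c k 3 + g4 \<bullet>c k 4 = 0" using ks x by simp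
qed (rule orth_ker_u_adj_imp_range_u[OF rep pos g gP], blast)

lemma in_ker_u_adj_nonzero_iff:
  assumes "in_ker_u_adj n P k"
  shows "k \<noteq> hat_zero n \<longleftrightarrow> k 1 \<noteq> 0\<^sub>v n \<or> k 2 \<noteq> 0\<^sub>v n \<or> k 3 \<noteq> 0\<^sub>v n \<or> k 4 \<noteq> 0\<^sub>v n"
proof
  assume "k \<noteq> hat_zero n"
  then obtain i where i: "k i \<noteq> 0\<^sub>v n" unfolding hat_zero_def by auto
  hence "i \<in> {1..4}" using assms unfolding in_ker_u_adj_def by auto
  hence "i = 1 \<or> i = 2 \<or> i = 3 \<or> i = 4" by auto
  thus "k 1 \<noteq> 0\<^sub>v n \<or> k 2 \<noteq> 0\<^sub>v n \<or> k 3 \<noteq> 0\<^sub>v n \<or> k 4 \<noteq> 0\<^sub>v n" using i by auto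
qed (auto simp: hat_zero_def)

text \<open>For k \<in> K, the eigenvalue equation of the compression of c (w3 w3* + w4 w4* ) to K says that
  the tuple (c w3 w3* + c w4 w4* - l) k is orthogonal to K, i.e. lies in ran u.\<close>

lemma compression_eigen_iff:
  fixes c l :: complex
  assumes rep: "is_rep n \<alpha> P" and pos: "\<alpha> > 0" and k: "in_ker_u_adj n P k"
  shows "(\<forall>k'\<in>hat_K n \<alpha> P. hat_inner (\<lambda>j. c \<cdot>\<^sub>v (hat_E n 3 k j + hat_E n 4 k j)) k' = l * hat_inner k k')
     \<longleftrightarrow> (\<exists>x\<in>carrier_vec n. P 1 *\<^sub>v x = (-l) \<cdot>\<^sub>v k 1 \<and> P 2 *\<^sub>v x = (-l) \<cdot>\<^sub>v k 2
            \<and> P 3 *\<^sub>v x = (c - l) \<cdot>\<^sub>v k 3 \<and> P 4 *\<^sub>v x = (c - l) \<cdot>\<^sub>v k 4)"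
    (is "_ \<longleftrightarrow> ?range_u")
proof -
  have kc: "k 1 \<in> carrier_vec n" "k 2 \<in> carrier_vec n" "k 3 \<in> carrier_vec n" "k 4 \<in> carrier_vec n"
    and kP: "P 1 *\<^sub>v k 1 = k 1" "P 2 *\<^sub>v k 2 = k 2" "P 3 *\<^sub>v k 3 = k 3" "P 4 *\<^sub>v k 4 = k 4"
    using k unfolding in_ker_u_adj_def by auto
  have "P 1 \<in> carrier_mat n n" "P 2 \<in> carrier_mat n n" "P 3 \<in> carrier_mat n n" "P 4 \<in> carrier_mat n n"
    using rep_carrier_mat[OF rep] by auto
  hence gP: "P 1 *\<^sub>v ((-l) \<cdot>\<^sub>v k 1) = (-l) \<cdot>\<^sub>v k 1" "P 2 *\<^sub>v ((-l) \<cdot>\<^sub>v k 2) = (-l) \<cdot>\<^sub>v k 2"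
    "P 3 *\<^sub>v ((c - l) \<cdot>\<^sub>v k 3) = (c - l) \<cdot>\<^sub>v k 3" "P 4 *\<^sub>v ((c - l) \<cdot>\<^sub>v k 4) = (c - l) \<cdot>\<^sub>v k 4"
    using kc kP by (auto simp: mult_mat_vec)
  have diff: "hat_inner (\<lambda>j. c \<cdot>\<^sub>v (hat_E n 3 k j + hat_E n 4 k j)) k' - l * hat_inner k k'
      = ((-l) \<cdot>\<^sub>v k 1) \<bullet>c k' 1 + ((-l) \<cdot>\<^sub>v k 2) \<bullet>c k' 2 + ((c - l) \<cdot>\<^sub>v k 3) \<bullet>c k' 3 + ((c - l) \<cdot>\<^sub>v k 4) \<bullet>c k' 4"
    if "in_ker_u_adj n P k'" for k'
  proof -
    note in_ker_u_adj_carrier[OF that]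
    moreover have "c \<cdot>\<^sub>v 0\<^sub>v n = (0\<^sub>v n :: complex vec)" by (intro eq_vecI) auto
    moreover have "(\<Sum>i\<in>{1..4::nat}. f i) = f 1 + f 2 + f 3 + f 4" for f :: "nat \<Rightarrow> complex"
      by (simp add: eval_nat_numeral atLeastAtMostSuc_conv add_ac)
    ultimately show ?thesis using kc unfolding hat_inner_def hat_E_def by (simp add: algebra_simps)
  qed
  have "(\<forall>k'\<in>hat_K n \<alpha> P. hat_inner (\<lambda>j. c \<cdot>\<^sub>v (hat_E n 3 k j + hat_E n 4 k j)) k' = l * hat_inner k k')
     \<longleftrightarrow> (\<forall>k'. in_ker_u_adj n P k' \<longrightarrow> ((-l) \<cdot>\<^sub>v k 1) \<bullet>c k' 1 + ((-l) \<cdot>\<^sub>v k 2) \<bullet>c k' 2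
              + ((c - l) \<cdot>\<^sub>v k 3) \<bullet>c k' 3 + ((c - l) \<cdot>\<^sub>v k 4) \<bullet>c k' 4 = 0)"
    (is "(\<forall>k'\<in>_. ?A k' = ?B k') \<longleftrightarrow> (\<forall>k'. _ \<longrightarrow> ?G k' = 0)")
  proof (intro iffI allI impI ballI)
    fix k' assume "\<forall>k'\<in>hat_K n \<alpha> P. ?A k' = ?B k'" "in_ker_u_adj n P k'"
    thus "?G k' = 0" using diff[of k'] hat_K_iff_in_ker_u_adj[OF rep pos] by simp
  next
    fix k' assume "\<forall>k'. in_ker_u_adj n P k' \<longrightarrow> ?G k' = 0" "k' \<in> hat_K n \<alpha> P"
    thus "?A k' = ?B k'" using diff[of k'] hat_K_iff_in_ker_u_adj[OF rep pos] by simp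
  qed
  also have "\<dots> \<longleftrightarrow> ?range_u"
    by (rule orth_ker_u_adj_iff_range_u[OF rep pos _ _ _ _ gP]) (use kc in auto)
  finally show ?thesis .
qed

lemma mem_hyp_Lam_iff:
  assumes rep: "is_rep n \<alpha> P" and pos: "\<alpha> > 0"
  shows "l \<in> hyp_Lam n \<alpha> P \<longleftrightarrow>
    (\<exists>k. in_ker_u_adj n P k \<and> (k 1 \<noteq> 0\<^sub>v n \<or> k 2 \<noteq> 0\<^sub>v n \<or> k 3 \<noteq> 0\<^sub>v n \<or> k 4 \<noteq> 0\<^sub>v n) \<and>
      (\<exists>x\<in>carrier_vec n. P 1 *\<^sub>v x = (-l) \<cdot>\<^sub>v k 1 \<and> P 2 *\<^sub>v x = (-l) \<cdot>\<^sub>v k 2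
         \<and> P 3 *\<^sub>v x = (of_real (\<alpha> / (\<alpha> - 1)) - l) \<cdot>\<^sub>v k 3
         \<and> P 4 *\<^sub>v x = (of_real (\<alpha> / (\<alpha> - 1)) - l) \<cdot>\<^sub>v k 4))"
    (is "_ \<longleftrightarrow> (\<exists>k. ?R k)")
proof -
  have "l \<in> hyp_Lam n \<alpha> P \<longleftrightarrow> (\<exists>k. in_ker_u_adj n P k \<and> k \<noteq> hat_zero n \<and>
      (\<forall>k'\<in>hat_K n \<alpha> P. hat_inner (\<lambda>j. of_real (\<alpha> / (\<alpha> - 1)) \<cdot>\<^sub>v (hat_E n 3 k j + hat_E n 4 k j)) k'
         = l * hat_inner k k'))" (is "_ \<longleftrightarrow> (\<exists>k. ?L k)")
    unfolding hyp_Lam_def using hat_K_iff_in_ker_u_adj[OF rep pos] by blast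
  also have "\<dots> \<longleftrightarrow> (\<exists>k. ?R k)"
  proof (rule ex_cong1)
    fix k show "?L k \<longleftrightarrow> ?R k"
      by (cases "in_ker_u_adj n P k") (auto simp: in_ker_u_adj_nonzero_iff compression_eigen_iff[OF rep pos])
  qed
  finally show ?thesis .
qed

definition hyp_map :: "real \<Rightarrow> complex \<Rightarrow> complex" where
  "hyp_map \<alpha> = (\<lambda>l. of_real (\<alpha> / (\<alpha> - 1)) - of_real (1 / (\<alpha> - 1)) * l)"

lemma hyp_map_zero: "hyp_map \<alpha> 0 = of_real (\<alpha> / (\<alpha> - 1))"
  unfolding hyp_map_def by simp

context
  fixes n :: nat and \<alpha> :: real and P :: "nat \<Rightarrow> complex mat"
  assumes rep: "is_rep n \<alpha> P" and pos: "\<alpha> > 0" and ne1: "\<alpha> \<noteq> 1"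
begin

lemma hyp_map_alpha: "hyp_map \<alpha> (of_real \<alpha>) = 0"
  unfolding hyp_map_def by (simp flip: of_real_mult)

lemma hyp_map_eq_iff:
  "hyp_map \<alpha> lam = l \<longleftrightarrow> (of_real (\<alpha> / (\<alpha> - 1)) - l) * of_real (\<alpha> - 1) = lam"
proof -
  define c D where "c = complex_of_real (\<alpha> / (\<alpha> - 1))" and "D = complex_of_real (\<alpha> - 1)"
  have D: "D \<noteq> 0" unfolding D_def using ne1 by simp
  have "hyp_map \<alpha> lam = c - lam / D" unfolding hyp_map_def c_def D_def by simp
  hence "hyp_map \<alpha> lam = l \<longleftrightarrow> c - l = lam / D" by (auto simp: algebra_simps)
  also have "\<dots> \<longleftrightarrow> (c - l) * D = lam" using D by (simp add: eq_divide_eq)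
  finally show ?thesis unfolding c_def D_def .
qed

lemma zero_mem_hyp_Lam:
  assumes "common_fixed_vector n (P 1) (P 2)"
  shows "0 \<in> hyp_Lam n \<alpha> P"
proof -
  obtain v where v: "v \<in> carrier_vec n" "v \<noteq> 0\<^sub>v n" "P 1 *\<^sub>v v = v" "P 2 *\<^sub>v v = v"
    using assms unfolding common_fixed_vector_def by blast
  have c: "P i \<in> carrier_mat n n" if "i \<in> {1..4}" for i using rep_carrier_mat[OF rep that] .
  have "P 2 *\<^sub>v (- v) = - (P 2 *\<^sub>v v)" using c[of 2] v(1) by (intro eq_vecI) auto
  hence "P 2 *\<^sub>v (- v) = - v" using v(4) by simp
  hence "in_ker_u_adj n P (tuple4 n v (- v) (0\<^sub>v n) (0\<^sub>v n))"
    unfolding in_ker_u_adj_tuple4_iff using v c[of 3] c[of 4] by (auto intro!: eq_vecI)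
  moreover have "P i *\<^sub>v 0\<^sub>v n = 0\<^sub>v n" if "i \<in> {1..4}" for i using c[OF that] by (intro eq_vecI) auto
  ultimately show ?thesis unfolding mem_hyp_Lam_iff[OF rep pos]
    using v by (intro exI[of _ "tuple4 n v (- v) (0\<^sub>v n) (0\<^sub>v n)"]) (auto intro!: bexI[of _ "0\<^sub>v n"] eq_vecI)
qed

lemma const_mem_hyp_Lam:
  assumes "common_fixed_vector n (P 3) (P 4)"
  shows "of_real (\<alpha> / (\<alpha> - 1)) \<in> hyp_Lam n \<alpha> P"
proof -
  obtain v where v: "v \<in> carrier_vec n" "v \<noteq> 0\<^sub>v n" "P 3 *\<^sub>v v = v" "P 4 *\<^sub>v v = v"
    using assms unfolding common_fixed_vector_def by blast
  have c: "P i \<in> carrier_mat n n" if "i \<in> {1..4}" for i using rep_carrier_mat[OF rep that] .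
  have "P 4 *\<^sub>v (- v) = - (P 4 *\<^sub>v v)" using c[of 4] v(1) by (intro eq_vecI) auto
  hence "P 4 *\<^sub>v (- v) = - v" using v(4) by simp
  hence "in_ker_u_adj n P (tuple4 n (0\<^sub>v n) (0\<^sub>v n) v (- v))"
    unfolding in_ker_u_adj_tuple4_iff using v c[of 1] c[of 2] by (auto intro!: eq_vecI)
  moreover have "P i *\<^sub>v 0\<^sub>v n = 0\<^sub>v n" if "i \<in> {1..4}" for i using c[OF that] by (intro eq_vecI) auto
  ultimately show ?thesis unfolding mem_hyp_Lam_iff[OF rep pos]
    using v by (intro exI[of _ "tuple4 n (0\<^sub>v n) (0\<^sub>v n) v (- v)"]) (auto intro!: bexI[of _ "0\<^sub>v n"] eq_vecI)
qed

text \<open>The witness k for l is obtained by rescaling the components P i x of a single vector x: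
  by -1/l for i = 1, 2 and by 1/(c - l) for i = 3, 4.\<close>

lemma mem_hyp_Lam_of_balanced_vector:
  assumes x: "x \<in> carrier_vec n" and l: "l \<noteq> 0" "of_real (\<alpha> / (\<alpha> - 1)) - l \<noteq> 0"
    and bal: "\<And>j. j < n \<Longrightarrow> ((P 1 *\<^sub>v x) $ j + (P 2 *\<^sub>v x) $ j) / l
        = ((P 3 *\<^sub>v x) $ j + (P 4 *\<^sub>v x) $ j) / (of_real (\<alpha> / (\<alpha> - 1)) - l)"
    and nz: "j < n" "(P 3 *\<^sub>v x) $ j + (P 4 *\<^sub>v x) $ j \<noteq> 0"
  shows "l \<in> hyp_Lam n \<alpha> P"
proof -
  define c where "c = complex_of_real (\<alpha> / (\<alpha> - 1))"
  define a b where "a = - 1 / l" and "b = 1 / (c - l)"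
  define k where "k = tuple4 n (a \<cdot>\<^sub>v (P 1 *\<^sub>v x)) (a \<cdot>\<^sub>v (P 2 *\<^sub>v x)) (b \<cdot>\<^sub>v (P 3 *\<^sub>v x)) (b \<cdot>\<^sub>v (P 4 *\<^sub>v x))"
  have P: "P i \<in> carrier_mat n n" "P i * P i = P i" if "i \<in> {1..4}" for i
    using orth_projD[OF rep_orth_proj[OF rep that]] by auto
  have Pc: "P 1 \<in> carrier_mat n n" "P 2 \<in> carrier_mat n n" "P 3 \<in> carrier_mat n n" "P 4 \<in> carrier_mat n n"
    using P by auto
  have fix_smult: "P i *\<^sub>v (s \<cdot>\<^sub>v (P i *\<^sub>v x)) = s \<cdot>\<^sub>v (P i *\<^sub>v x)" if "i \<in> {1..4}" for i s
    using P[OF that] x by (simp add: mult_mat_vec assoc_mult_mat_vec[symmetric])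
  have "in_ker_u_adj n P k"
    unfolding k_def in_ker_u_adj_tuple4_iff
  proof (intro conjI)
    show "a \<cdot>\<^sub>v (P 1 *\<^sub>v x) + a \<cdot>\<^sub>v (P 2 *\<^sub>v x) + b \<cdot>\<^sub>v (P 3 *\<^sub>v x) + b \<cdot>\<^sub>v (P 4 *\<^sub>v x) = 0\<^sub>v n"
    proof (rule eq_vecI)
      fix j assume "j < dim_vec (0\<^sub>v n :: complex vec)"
      hence j: "j < n" by simp
      have "a * ((P 1 *\<^sub>v x) $ j + (P 2 *\<^sub>v x) $ j) + b * ((P 3 *\<^sub>v x) $ j + (P 4 *\<^sub>v x) $ j) = 0"
        using bal[OF j] unfolding a_def b_def c_def by simp
      thus "(a \<cdot>\<^sub>v (P 1 *\<^sub>v x) + a \<cdot>\<^sub>v (P 2 *\<^sub>v x) + b \<cdot>\<^sub>v (P 3 *\<^sub>v x) + b \<cdot>\<^sub>v (P 4 *\<^sub>v x)) $ j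
          = 0\<^sub>v n $ j"
        using Pc x j by (simp add: algebra_simps)
    qed (use Pc x in auto)
  qed (use x Pc fix_smult[of 1] fix_smult[of 2] fix_smult[of 3] fix_smult[of 4] in auto)
  moreover have "k 3 \<noteq> 0\<^sub>v n \<or> k 4 \<noteq> 0\<^sub>v n"
    using nz x P l unfolding k_def b_def c_def by (auto simp: vec_eq_iff)
  moreover have "P 1 *\<^sub>v x = (-l) \<cdot>\<^sub>v k 1" "P 2 *\<^sub>v x = (-l) \<cdot>\<^sub>v k 2"
    "P 3 *\<^sub>v x = (c - l) \<cdot>\<^sub>v k 3" "P 4 *\<^sub>v x = (c - l) \<cdot>\<^sub>v k 4"
    using x P l unfolding k_def a_def b_def c_def by (auto simp: smult_smult_assoc)
  ultimately show ?thesis unfolding mem_hyp_Lam_iff[OF rep pos] c_def using x by blast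
qed

lemma hyp_map_mem_hyp_Lam:
  assumes lam: "lam \<in> Lam P" "lam \<noteq> 0" "lam \<noteq> of_real \<alpha>"
  shows "hyp_map \<alpha> lam \<in> hyp_Lam n \<alpha> P"
proof -
  define c l where "c = complex_of_real (\<alpha> / (\<alpha> - 1))" and "l = hyp_map \<alpha> lam"
  have Pc: "P 3 \<in> carrier_mat n n" "P 4 \<in> carrier_mat n n" using rep_carrier_mat[OF rep] by auto
  obtain x where x: "x \<in> carrier_vec n" "x \<noteq> 0\<^sub>v n"
    and E34: "\<And>j. j < n \<Longrightarrow> (P 3 *\<^sub>v x) $ j + (P 4 *\<^sub>v x) $ j = lam * x $ j"
    using lam(1) mem_Lam_iff[OF Pc] by blast
  have E12: "(P 1 *\<^sub>v x) $ j + (P 2 *\<^sub>v x) $ j = (of_real \<alpha> - lam) * x $ j" if "j < n" for j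
    using rep_mult_vec_nth[OF rep x(1) that] E34[OF that] by (simp add: algebra_simps)
  define D where "D = complex_of_real (\<alpha> - 1)"
  have cl_a1: "(c - l) * D = lam" using hyp_map_eq_iff unfolding l_def c_def D_def by blast
  moreover have "c * D = of_real \<alpha>" unfolding c_def D_def using ne1 by (simp flip: of_real_mult)
  ultimately have l_a1: "l * D = of_real \<alpha> - lam" by (simp add: algebra_simps)
  have l0: "l \<noteq> 0" using l_a1 lam(3) by auto
  have cl0: "c - l \<noteq> 0" using cl_a1 lam(2) by auto
  obtain j where j: "j < n" "x $ j \<noteq> 0" using x by (auto simp: vec_eq_iff)
  have "l \<in> hyp_Lam n \<alpha> P"
  proof (rule mem_hyp_Lam_of_balanced_vector[OF x(1) l0 cl0[unfolded c_def] _ j(1)])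
    fix i assume i: "i < n"
    have "((P 1 *\<^sub>v x) $ i + (P 2 *\<^sub>v x) $ i) / l = D * x $ i"
      unfolding E12[OF i] l_a1[symmetric] using l0 by simp
    moreover have "((P 3 *\<^sub>v x) $ i + (P 4 *\<^sub>v x) $ i) / (c - l) = D * x $ i"
      unfolding E34[OF i] cl_a1[symmetric] using cl0 by simp
    ultimately show "((P 1 *\<^sub>v x) $ i + (P 2 *\<^sub>v x) $ i) / l
        = ((P 3 *\<^sub>v x) $ i + (P 4 *\<^sub>v x) $ i) / (complex_of_real (\<alpha> / (\<alpha> - 1)) - l)"
      unfolding c_def by simp
  next
    show "(P 3 *\<^sub>v x) $ j + (P 4 *\<^sub>v x) $ j \<noteq> 0" using E34[OF j(1)] j(2) lam(2) by simp
  qed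
  thus ?thesis unfolding l_def .
qed

lemma hyp_witness_sum34:
  assumes k: "in_ker_u_adj n P k" and x: "x \<in> carrier_vec n"
    and X: "P 1 *\<^sub>v x = (-l) \<cdot>\<^sub>v k 1" "P 2 *\<^sub>v x = (-l) \<cdot>\<^sub>v k 2"
      "P 3 *\<^sub>v x = (of_real (\<alpha> / (\<alpha> - 1)) - l) \<cdot>\<^sub>v k 3" "P 4 *\<^sub>v x = (of_real (\<alpha> / (\<alpha> - 1)) - l) \<cdot>\<^sub>v k 4"
    and j: "j < n"
  shows "k 3 $ j + k 4 $ j = of_real (\<alpha> - 1) * x $ j"
proof -
  define c D where "c = complex_of_real (\<alpha> / (\<alpha> - 1))" and "D = complex_of_real (\<alpha> - 1)"
  have kc: "k i \<in> carrier_vec n" for i using in_ker_u_adj_carrier[OF k] .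
  have "(k 1 + k 2 + k 3 + k 4) $ j = 0" using k j unfolding in_ker_u_adj_def by simp
  hence "(k 1 $ j + k 2 $ j) + (k 3 $ j + k 4 $ j) = 0"
    using kc[of 1] kc[of 2] kc[of 3] kc[of 4] j by (simp add: add.assoc)
  hence k12: "k 1 $ j + k 2 $ j = - (k 3 $ j + k 4 $ j)" by (metis eq_neg_iff_add_eq_0)
  have "of_real \<alpha> * x $ j = (P 1 *\<^sub>v x) $ j + (P 2 *\<^sub>v x) $ j + (P 3 *\<^sub>v x) $ j + (P 4 *\<^sub>v x) $ j"
    using rep_mult_vec_nth[OF rep x j] by simp
  also have "\<dots> = -l * (k 1 $ j + k 2 $ j) + (c - l) * (k 3 $ j + k 4 $ j)"
    unfolding X c_def using kc[of 1] kc[of 2] kc[of 3] kc[of 4] j by (simp add: algebra_simps)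
  also have "\<dots> = c * (k 3 $ j + k 4 $ j)" unfolding k12 by (simp add: algebra_simps)
  finally have "of_real \<alpha> * x $ j = c * (k 3 $ j + k 4 $ j)" .
  moreover have "c * D = of_real \<alpha>" "D \<noteq> 0" unfolding c_def D_def using ne1 by (simp_all flip: of_real_mult)
  ultimately have "c * (D * x $ j) = c * (k 3 $ j + k 4 $ j)" by (metis mult.assoc)
  moreover have "c \<noteq> 0" unfolding c_def using ne1 pos by simp
  ultimately show ?thesis unfolding D_def by simp
qed

lemma degenerate_witness_cases:
  assumes k: "in_ker_u_adj n P k" and nz: "k 1 \<noteq> 0\<^sub>v n \<or> k 2 \<noteq> 0\<^sub>v n \<or> k 3 \<noteq> 0\<^sub>v n \<or> k 4 \<noteq> 0\<^sub>v n"
    and zero: "(-l) \<cdot>\<^sub>v k 1 = 0\<^sub>v n" "(-l) \<cdot>\<^sub>v k 2 = 0\<^sub>v n"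
      "(of_real (\<alpha> / (\<alpha> - 1)) - l) \<cdot>\<^sub>v k 3 = 0\<^sub>v n" "(of_real (\<alpha> / (\<alpha> - 1)) - l) \<cdot>\<^sub>v k 4 = 0\<^sub>v n"
    and k34: "k 3 + k 4 = 0\<^sub>v n"
  shows "(l = 0 \<and> common_fixed_vector n (P 1) (P 2))
    \<or> (l = of_real (\<alpha> / (\<alpha> - 1)) \<and> common_fixed_vector n (P 3) (P 4))"
proof -
  define c where "c = complex_of_real (\<alpha> / (\<alpha> - 1))"
  have kc: "k i \<in> carrier_vec n" for i using in_ker_u_adj_carrier[OF k] .
  hence kd: "dim_vec (k i) = n" for i by (rule carrier_vecD)
  have kP: "P i *\<^sub>v k i = k i" if "i \<in> {1..4}" for i using in_ker_u_adj_fixed[OF k that] .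
  have Pc: "P i \<in> carrier_mat n n" if "i \<in> {1..4}" for i using rep_carrier_mat[OF rep that] .
  have "k 1 + k 2 + k 3 + k 4 = 0\<^sub>v n" using k unfolding in_ker_u_adj_def by simp
  hence k12: "k 1 + k 2 = 0\<^sub>v n" using k34 kd by (auto simp: vec_eq_iff add.assoc add_eq_0_iff)
  consider "l = 0" | "l = c" | "l \<noteq> 0" "l \<noteq> c" by blast
  thus ?thesis
  proof cases
    case 1
    hence "k 3 = 0\<^sub>v n" "k 4 = 0\<^sub>v n" using zero kd ne1 pos unfolding c_def by (auto simp: vec_eq_iff)
    hence "common_fixed_vector n (P 1) (P 2)"
      using common_fixed_vector_of_opposite[OF Pc[of 2] kc[of 1] kP[of 1] kc[of 2] kP[of 2] k12] nz by auto
    thus ?thesis using 1 by blast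
  next
    case 2
    hence "k 1 = 0\<^sub>v n" "k 2 = 0\<^sub>v n" using zero kd ne1 pos unfolding c_def by (auto simp: vec_eq_iff)
    hence "common_fixed_vector n (P 3) (P 4)"
      using common_fixed_vector_of_opposite[OF Pc[of 4] kc[of 3] kP[of 3] kc[of 4] kP[of 4] k34] nz by auto
    thus ?thesis using 2 unfolding c_def by blast
  next
    case 3
    hence "k 1 = 0\<^sub>v n" "k 2 = 0\<^sub>v n" "k 3 = 0\<^sub>v n" "k 4 = 0\<^sub>v n"
      using zero kd unfolding c_def by (auto simp: vec_eq_iff)
    thus ?thesis using nz by blast
  qed
qed

lemma hyp_Lam_cases:
  assumes "l \<in> hyp_Lam n \<alpha> P"
  shows "l \<in> hyp_map \<alpha> ` Lam P \<or> (l = 0 \<and> common_fixed_vector n (P 1) (P 2))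
    \<or> (l = of_real (\<alpha> / (\<alpha> - 1)) \<and> common_fixed_vector n (P 3) (P 4))"
proof -
  define c where "c = complex_of_real (\<alpha> / (\<alpha> - 1))"
  obtain k x where k: "in_ker_u_adj n P k" and nz: "k 1 \<noteq> 0\<^sub>v n \<or> k 2 \<noteq> 0\<^sub>v n \<or> k 3 \<noteq> 0\<^sub>v n \<or> k 4 \<noteq> 0\<^sub>v n"
    and x: "x \<in> carrier_vec n" and X: "P 1 *\<^sub>v x = (-l) \<cdot>\<^sub>v k 1" "P 2 *\<^sub>v x = (-l) \<cdot>\<^sub>v k 2"
      "P 3 *\<^sub>v x = (c - l) \<cdot>\<^sub>v k 3" "P 4 *\<^sub>v x = (c - l) \<cdot>\<^sub>v k 4"
    using assms unfolding mem_hyp_Lam_iff[OF rep pos] c_def by blast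
  have kc: "k i \<in> carrier_vec n" for i using in_ker_u_adj_carrier[OF k] .
  have Pc: "P i \<in> carrier_mat n n" if "i \<in> {1..4}" for i using rep_carrier_mat[OF rep that] .
  have S34: "k 3 $ j + k 4 $ j = of_real (\<alpha> - 1) * x $ j" if "j < n" for j
    using hyp_witness_sum34[OF k x X[unfolded c_def] that] .
  show ?thesis
  proof (cases "x = 0\<^sub>v n")
    case False
    define lam where "lam = (c - l) * of_real (\<alpha> - 1)"
    have "lam \<in> Lam P" unfolding mem_Lam_iff[OF Pc[of 3] Pc[of 4], simplified]
    proof (intro bexI[of _ x] conjI allI impI)
      fix j assume j: "j < n"
      have "(P 3 *\<^sub>v x) $ j + (P 4 *\<^sub>v x) $ j = (c - l) * (k 3 $ j + k 4 $ j)"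
        unfolding X using kc[of 3] kc[of 4] j by (simp add: algebra_simps)
      thus "(P 3 *\<^sub>v x) $ j + (P 4 *\<^sub>v x) $ j = lam * x $ j" unfolding S34[OF j] lam_def by simp
    qed (use False x in auto)
    moreover have "hyp_map \<alpha> lam = l" unfolding hyp_map_eq_iff lam_def c_def ..
    ultimately show ?thesis by (metis image_eqI)
  next
    case True
    have "P i *\<^sub>v x = 0\<^sub>v n" if "i \<in> {1..4}" for i using Pc[OF that] True by (auto intro!: eq_vecI)
    hence "(-l) \<cdot>\<^sub>v k 1 = 0\<^sub>v n" "(-l) \<cdot>\<^sub>v k 2 = 0\<^sub>v n" "(c - l) \<cdot>\<^sub>v k 3 = 0\<^sub>v n" "(c - l) \<cdot>\<^sub>v k 4 = 0\<^sub>v n"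
      using X by auto
    moreover have "k 3 + k 4 = 0\<^sub>v n" using S34 True kc[of 3] kc[of 4] by (auto intro!: eq_vecI)
    ultimately show ?thesis using degenerate_witness_cases[OF k nz] unfolding c_def by blast
  qed
qed

lemma hyp_Lam_if_rank_12_gt:
  assumes gt: "rk n (P 1) + rk n (P 2) > n" and eq: "n = rk n (P 3) + rk n (P 4)"
  shows "hyp_Lam n \<alpha> P = {0} \<union> hyp_map \<alpha> ` Lam P"
proof
  have P: "orth_proj n (P i)" if "i \<in> {1..4}" for i using rep_orth_proj[OF rep that] .
  have zero: "0 \<in> hyp_Lam n \<alpha> P"
    using zero_mem_hyp_Lam common_fixed_vector_if_rank_gt[OF orth_projD(1,2)[OF P] orth_projD(1,2)[OF P] gt]
    by simp
  have fixed34: "common_fixed_vector n (P 3) (P 4) \<longleftrightarrow> 0 \<in> Lam P"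
    using common_fixed_vector_iff_common_null_vector[OF P P eq[symmetric]] zero_mem_Lam_iff[OF rep] by simp
  show "hyp_Lam n \<alpha> P \<subseteq> {0} \<union> hyp_map \<alpha> ` Lam P"
  proof
    fix l assume "l \<in> hyp_Lam n \<alpha> P"
    then consider "l \<in> hyp_map \<alpha> ` Lam P" | "l = 0" | "l = hyp_map \<alpha> 0" "0 \<in> Lam P"
      using hyp_Lam_cases fixed34 hyp_map_zero by metis
    thus "l \<in> {0} \<union> hyp_map \<alpha> ` Lam P" by cases auto
  qed
  show "{0} \<union> hyp_map \<alpha> ` Lam P \<subseteq> hyp_Lam n \<alpha> P"
  proof (intro Un_least subsetI; elim imageE singletonE)
    fix l lam assume "lam \<in> Lam P" "l = hyp_map \<alpha> lam"
    thus "l \<in> hyp_Lam n \<alpha> P"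
      using zero hyp_map_mem_hyp_Lam[of lam] const_mem_hyp_Lam fixed34 hyp_map_zero hyp_map_alpha
      by (cases "lam = 0"; cases "lam = of_real \<alpha>") auto
  qed (use zero in simp)
qed

lemma hyp_Lam_if_rank_34_gt:
  assumes gt: "rk n (P 3) + rk n (P 4) > n" and eq: "n = rk n (P 1) + rk n (P 2)"
  shows "hyp_Lam n \<alpha> P = {of_real (\<alpha> / (\<alpha> - 1))} \<union> hyp_map \<alpha> ` Lam P"
proof
  have P: "orth_proj n (P i)" if "i \<in> {1..4}" for i using rep_orth_proj[OF rep that] .
  have const: "of_real (\<alpha> / (\<alpha> - 1)) \<in> hyp_Lam n \<alpha> P"
    using const_mem_hyp_Lam common_fixed_vector_if_rank_gt[OF orth_projD(1,2)[OF P] orth_projD(1,2)[OF P] gt]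
    by simp
  have fixed12: "common_fixed_vector n (P 1) (P 2) \<longleftrightarrow> of_real \<alpha> \<in> Lam P"
    using common_fixed_vector_iff_common_null_vector[OF P P eq[symmetric]] alpha_mem_Lam_iff[OF rep] by simp
  show "hyp_Lam n \<alpha> P \<subseteq> {of_real (\<alpha> / (\<alpha> - 1))} \<union> hyp_map \<alpha> ` Lam P"
  proof
    fix l assume "l \<in> hyp_Lam n \<alpha> P"
    then consider "l \<in> hyp_map \<alpha> ` Lam P" | "l = hyp_map \<alpha> (of_real \<alpha>)" "of_real \<alpha> \<in> Lam P"
      | "l = of_real (\<alpha> / (\<alpha> - 1))"
      using hyp_Lam_cases fixed12 hyp_map_alpha by metis
    thus "l \<in> {of_real (\<alpha> / (\<alpha> - 1))} \<union> hyp_map \<alpha> ` Lam P" by cases auto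
  qed
  show "{of_real (\<alpha> / (\<alpha> - 1))} \<union> hyp_map \<alpha> ` Lam P \<subseteq> hyp_Lam n \<alpha> P"
  proof (intro Un_least subsetI; elim imageE singletonE)
    fix l lam assume "lam \<in> Lam P" "l = hyp_map \<alpha> lam"
    thus "l \<in> hyp_Lam n \<alpha> P"
      using const hyp_map_mem_hyp_Lam[of lam] zero_mem_hyp_Lam fixed12 hyp_map_zero hyp_map_alpha
      by (cases "lam = 0"; cases "lam = of_real \<alpha>") auto
  qed (use const in simp)
qed

end

lemma hyp_map_reflected:
  assumes "\<alpha> < 3"
  shows "hyp_map (4 - \<alpha>) (2 - l) = of_real (1 - 1 / (3 - \<alpha>)) + of_real (1 / (3 - \<alpha>)) * l"
proof -
  define d where "d = complex_of_real (3 - \<alpha>)"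
  have "3 - \<alpha> \<noteq> 0" using assms by simp
  hence "d \<noteq> 0" unfolding d_def by (metis of_real_eq_0_iff)
  moreover have "complex_of_real ((4 - \<alpha>) / (4 - \<alpha> - 1)) = (d + 1) / d"
    "complex_of_real (1 / (4 - \<alpha> - 1)) = 1 / d" "complex_of_real (1 - 1 / (3 - \<alpha>)) = 1 - 1 / d"
    "complex_of_real (1 / (3 - \<alpha>)) = 1 / d"
    unfolding d_def by (simp_all add: of_real_divide)
  ultimately show ?thesis unfolding hyp_map_def by (simp add: field_simps)
qed

lemma phi_plus_Lam_if_rank_12_lt:
  assumes rep: "is_rep n \<alpha> P" and \<alpha>: "0 < \<alpha>" "\<alpha> < 3"
    and lt: "rk n (P 1) + rk n (P 2) < n" and eq: "n = rk n (P 3) + rk n (P 4)"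
  shows "phi_plus_Lam n \<alpha> P = {0} \<union> (\<lambda>l. of_real (1 - 1 / (3 - \<alpha>)) + of_real (1 / (3 - \<alpha>)) * l) ` Lam P"
proof -
  have rk: "rk n (lin_refl n P i) + rk n (P i) = n" if "i \<in> {1..4}" for i
    using rank_lin_refl[OF rep that] .
  have "hyp_Lam n (4 - \<alpha>) (lin_refl n P) = {0} \<union> hyp_map (4 - \<alpha>) ` Lam (lin_refl n P)"
    by (rule hyp_Lam_if_rank_12_gt[OF rep_lin_refl[OF rep]])
      (use \<alpha> lt eq rk[of 1] rk[of 2] rk[of 3] rk[of 4] in auto)
  thus ?thesis unfolding phi_plus_Lam_def Lam_lin_refl[OF rep] image_image hyp_map_reflected[OF \<alpha>(2)] .
qed

lemma phi_plus_Lam_if_rank_34_lt: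
  assumes rep: "is_rep n \<alpha> P" and \<alpha>: "0 < \<alpha>" "\<alpha> < 3"
    and lt: "rk n (P 3) + rk n (P 4) < n" and eq: "n = rk n (P 1) + rk n (P 2)"
  shows "phi_plus_Lam n \<alpha> P = {of_real (1 + 1 / (3 - \<alpha>))}
    \<union> (\<lambda>l. of_real (1 - 1 / (3 - \<alpha>)) + of_real (1 / (3 - \<alpha>)) * l) ` Lam P"
proof -
  have rk: "rk n (lin_refl n P i) + rk n (P i) = n" if "i \<in> {1..4}" for i
    using rank_lin_refl[OF rep that] .
  have "(4 - \<alpha>) / (4 - \<alpha> - 1) = 1 + 1 / (3 - \<alpha>)" using \<alpha> by (simp add: field_simps)
  moreover have "hyp_Lam n (4 - \<alpha>) (lin_refl n P)
      = {of_real ((4 - \<alpha>) / (4 - \<alpha> - 1))} \<union> hyp_map (4 - \<alpha>) ` Lam (lin_refl n P)"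
    by (rule hyp_Lam_if_rank_34_gt[OF rep_lin_refl[OF rep]])
      (use \<alpha> lt eq rk[of 1] rk[of 2] rk[of 3] rk[of 4] in auto)
  ultimately show ?thesis
    unfolding phi_plus_Lam_def Lam_lin_refl[OF rep] image_image hyp_map_reflected[OF \<alpha>(2)] by (simp only:)
qed

theorem lemma4p3:
  fixes n :: nat and \<alpha> :: real and P :: "nat \<Rightarrow> complex mat"
  assumes rep: "is_rep n \<alpha> P"
  shows "Lam (lin_refl n P) = (\<lambda>l. 2 - l) ` Lam P
    \<and> (\<alpha> > 0 \<and> \<alpha> \<noteq> 1 \<longrightarrow>
        (rk n (P 1) + rk n (P 2) > n \<and> n = rk n (P 3) + rk n (P 4) \<longrightarrow>
           hyp_Lam n \<alpha> P = {0} \<union> (\<lambda>l. of_real (\<alpha> / (\<alpha> - 1)) - of_real (1 / (\<alpha> - 1)) * l) ` Lam P)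
      \<and> (rk n (P 3) + rk n (P 4) > n \<and> n = rk n (P 1) + rk n (P 2) \<longrightarrow>
           hyp_Lam n \<alpha> P = {of_real (\<alpha> / (\<alpha> - 1))}
             \<union> (\<lambda>l. of_real (\<alpha> / (\<alpha> - 1)) - of_real (1 / (\<alpha> - 1)) * l) ` Lam P))
    \<and> (0 < \<alpha> \<and> \<alpha> < 3 \<longrightarrow>
        (rk n (P 1) + rk n (P 2) < n \<and> n = rk n (P 3) + rk n (P 4) \<longrightarrow>
           phi_plus_Lam n \<alpha> P = {0} \<union> (\<lambda>l. of_real (1 - 1 / (3 - \<alpha>)) + of_real (1 / (3 - \<alpha>)) * l) ` Lam P)
      \<and> (rk n (P 3) + rk n (P 4) < n \<and> n = rk n (P 1) + rk n (P 2) \<longrightarrow>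
           phi_plus_Lam n \<alpha> P = {of_real (1 + 1 / (3 - \<alpha>))}
             \<union> (\<lambda>l. of_real (1 - 1 / (3 - \<alpha>)) + of_real (1 / (3 - \<alpha>)) * l) ` Lam P))"
  by (intro conjI impI; (elim conjE)?)
    (simp_all add: Lam_lin_refl[OF rep]
      hyp_Lam_if_rank_12_gt[OF rep, unfolded hyp_map_def] hyp_Lam_if_rank_34_gt[OF rep, unfolded hyp_map_def]
      phi_plus_Lam_if_rank_12_lt[OF rep] phi_plus_Lam_if_rank_34_lt[OF rep])

end
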